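(* Let $M$ be a homogeneous monoid that is automatic (respectively, biautomatic). Then for every finite alphabet $C$ representing a generating set of $M$, there is a language $K\subseteq C^*$ such that $(C,K)$ is an automatic (respectively, biautomatic) structure for $M$.
   Context: A monoid is homogeneous if it admits a finite presentation $\langle A\mid\mathcal{R}\rangle$ with $|u|=|v|$ for all $(u,v)\in\mathcal{R}$. For an alphabet $A$ and new symbol $\$$, $\delta_R$ maps a pair $(u,v)$ of words to the word over $(A\cup\{\$\})^2$ obtained by padding the shorter word at its end with $\$$'s; $\delta_L$ pads at the beginning. For a monoid $M$ generated by a finite alphabet $A$ and a regular language $L\subseteq A^*$ mapping onto $M$, let $L_a=\{(u,v)\in L\times L: ua=_M v\}$ and ${}_aL=\{(u,v)\in L\times L: au=_M v\}$ for $a\in A\cup\{\varepsilon\}$. $(A,L)$ is an automatic structure if all $L_a\delta_R$ are regular, a biautomatic structure if all $L_a\delta_R,{}_aL\delta_R,L_a\delta_L,{}_aL\delta_L$ are regular. $M$ is automatic (biautomatic) if it has an automatic (biautomatic) structure for some finite generating alphabet. *)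

theory Defs
  imports Main
begin

definition eval :: "('c \<Rightarrow> 'm::monoid_mult) \<Rightarrow> 'c list \<Rightarrow> 'm" where
  "eval \<phi> w = prod_list (map \<phi> w)"

definition regular :: "'b set \<Rightarrow> 'b list set \<Rightarrow> bool" where
  "regular \<Sigma> L \<longleftrightarrow> finite \<Sigma> \<and>
     (\<exists>(Q::nat set) q0 (\<delta>::nat \<Rightarrow> 'b \<Rightarrow> nat) F.
        finite Q \<and> q0 \<in> Q \<and> F \<subseteq> Q \<and>
        (\<forall>q\<in>Q. \<forall>a\<in>\<Sigma>. \<delta> q a \<in> Q) \<and>
        L = {w \<in> lists \<Sigma>. foldl \<delta> q0 w \<in> F})"

section \<open>Padding maps delta_R and delta_L; None plays the role of the symbol \$\<close>

definition padR :: "'c list \<Rightarrow> 'c list \<Rightarrow> ('c option \<times> 'c option) list" where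
  "padR u v = zip (map Some u @ replicate (length v - length u) None)
                  (map Some v @ replicate (length u - length v) None)"

definition padL :: "'c list \<Rightarrow> 'c list \<Rightarrow> ('c option \<times> 'c option) list" where
  "padL u v = zip (replicate (length v - length u) None @ map Some u)
                  (replicate (length u - length v) None @ map Some v)"

definition pair_alph :: "'c set \<Rightarrow> ('c option \<times> 'c option) set" where
  "pair_alph C = (insert None (Some ` C)) \<times> (insert None (Some ` C))"

definition short_words :: "'c set \<Rightarrow> 'c list set" where
  "short_words C = insert [] ((\<lambda>c. [c]) ` C)"

definition right_rel :: "('c \<Rightarrow> 'm::monoid_mult) \<Rightarrow> 'c list set \<Rightarrow> 'c list \<Rightarrow> ('c list \<times> 'c list) set" where
  "right_rel \<phi> L a = {(u, v). u \<in> L \<and> v \<in> L \<and> eval \<phi> (u @ a) = eval \<phi> v}"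

definition left_rel :: "('c \<Rightarrow> 'm::monoid_mult) \<Rightarrow> 'c list set \<Rightarrow> 'c list \<Rightarrow> ('c list \<times> 'c list) set" where
  "left_rel \<phi> L a = {(u, v). u \<in> L \<and> v \<in> L \<and> eval \<phi> (a @ u) = eval \<phi> v}"

definition automatic_structure :: "('c \<Rightarrow> 'm::monoid_mult) \<Rightarrow> 'c set \<Rightarrow> 'c list set \<Rightarrow> bool" where
  "automatic_structure \<phi> C L \<longleftrightarrow>
     finite C \<and> L \<subseteq> lists C \<and> regular C L \<and> eval \<phi> ` L = UNIV \<and>
     (\<forall>a \<in> short_words C.
        regular (pair_alph C) ((\<lambda>(u, v). padR u v) ` right_rel \<phi> L a))"

definition biautomatic_structure :: "('c \<Rightarrow> 'm::monoid_mult) \<Rightarrow> 'c set \<Rightarrow> 'c list set \<Rightarrow> bool" where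
  "biautomatic_structure \<phi> C L \<longleftrightarrow>
     finite C \<and> L \<subseteq> lists C \<and> regular C L \<and> eval \<phi> ` L = UNIV \<and>
     (\<forall>a \<in> short_words C.
        regular (pair_alph C) ((\<lambda>(u, v). padR u v) ` right_rel \<phi> L a) \<and>
        regular (pair_alph C) ((\<lambda>(u, v). padR u v) ` left_rel \<phi> L a) \<and>
        regular (pair_alph C) ((\<lambda>(u, v). padL u v) ` right_rel \<phi> L a) \<and>
        regular (pair_alph C) ((\<lambda>(u, v). padL u v) ` left_rel \<phi> L a))"

text \<open>A monoid is (bi)automatic if it has a (bi)automatic structure over some finite
generating alphabet; finite alphabets are taken (w.l.o.g., up to renaming) as
finite sets of natural numbers.\<close>

definition automatic :: "'m::monoid_mult itself \<Rightarrow> bool" where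
  "automatic _ \<longleftrightarrow> (\<exists>(A::nat set) (\<phi>::nat \<Rightarrow> 'm) L. automatic_structure \<phi> A L)"

definition biautomatic :: "'m::monoid_mult itself \<Rightarrow> bool" where
  "biautomatic _ \<longleftrightarrow> (\<exists>(A::nat set) (\<phi>::nat \<Rightarrow> 'm) L. biautomatic_structure \<phi> A L)"

definition rstep :: "('c list \<times> 'c list) set \<Rightarrow> ('c list \<times> 'c list) set" where
  "rstep R = {(x @ l @ y, x @ r @ y) | x l r y. (l, r) \<in> R}"

definition rcong :: "'c set \<Rightarrow> ('c list \<times> 'c list) set \<Rightarrow> ('c list \<times> 'c list) set" where
  "rcong A R = {(u, v). u \<in> lists A \<and> v \<in> lists A \<and> (u, v) \<in> (rstep R \<union> (rstep R)\<inverse>)\<^sup>*}"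

definition is_presentation :: "('c \<Rightarrow> 'm::monoid_mult) \<Rightarrow> 'c set \<Rightarrow> ('c list \<times> 'c list) set \<Rightarrow> bool" where
  "is_presentation \<phi> A R \<longleftrightarrow>
     (\<forall>(l, r) \<in> R. l \<in> lists A \<and> r \<in> lists A) \<and>
     eval \<phi> ` lists A = UNIV \<and>
     (\<forall>u \<in> lists A. \<forall>v \<in> lists A. eval \<phi> u = eval \<phi> v \<longleftrightarrow> (u, v) \<in> rcong A R)"

definition homogeneous :: "'m::monoid_mult itself \<Rightarrow> bool" where
  "homogeneous _ \<longleftrightarrow> (\<exists>(A::nat set) (\<phi>::nat \<Rightarrow> 'm) R.
     finite A \<and> finite R \<and> is_presentation \<phi> A R \<and>
     (\<forall>(u, v) \<in> R. length u = length v))"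

end

theory Submission
  imports Defs
begin

text \<open>
  Homogeneity makes the length of representatives a
  homomorphism \<open>len : M \<rightarrow> \<nat>\<close>, so every element of length one (an atom) is the image of a
  letter of \<open>C\<close>, and every element is represented by a word of atom letters of \<open>C\<close> whose
  length is its \<open>len\<close>. Replacing each letter \<open>b\<close> of \<open>B\<close> by such a word \<open>\<sigma> b\<close> gives
  \<open>K = \<sigma>(L)\<close>, and the \<open>\<sigma>\<close>-images of words related by \<open>L\<^sub>a\<close> differ in length by at most
  \<open>len a\<close>.

  Then \<open>K\<^sub>c\<close> for an atom letter \<open>c\<close>
  is the \<open>\<sigma>\<close>-image of \<open>L\<^sub>b\<close> with \<open>b\<close> representing \<open>c\<close>; for an arbitrary word \<open>a\<close>, \<open>K\<^sub>a\<close>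
  equals \<open>K\<^sub>a\<^sub>'\<close> for an atom word \<open>a'\<close>, a composition of such relations; and \<open>K\<close> itself
  is regular as the diagonal of \<open>K\<^sub>\<epsilon>\<close>. Left padding is handled by reversal.
\<close>

section \<open>Finite automata and closure properties of regular languages\<close>

fun accepts :: "('q \<Rightarrow> 'a \<Rightarrow> 'q set) \<Rightarrow> 'q set \<Rightarrow> 'q \<Rightarrow> 'a list \<Rightarrow> bool" where
  "accepts \<Delta> F q [] \<longleftrightarrow> q \<in> F"
| "accepts \<Delta> F q (a # w) \<longleftrightarrow> (\<exists>q' \<in> \<Delta> q a. accepts \<Delta> F q' w)"

definition set_step :: "('q \<Rightarrow> 'a \<Rightarrow> 'q set) \<Rightarrow> 'q set \<Rightarrow> 'a \<Rightarrow> 'q set" where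
  "set_step \<Delta> S a = (\<Union>q\<in>S. \<Delta> q a)"

lemma accepts_from_set: "(\<exists>q\<in>S. accepts \<Delta> F q w) \<longleftrightarrow> foldl (set_step \<Delta>) S w \<inter> F \<noteq> {}"
proof (induction w arbitrary: S)
  case (Cons a w)
  have "(\<exists>q\<in>S. accepts \<Delta> F q (a # w)) \<longleftrightarrow> (\<exists>q\<in>set_step \<Delta> S a. accepts \<Delta> F q w)"
    by (auto simp: set_step_def)
  then show ?case using Cons[of "set_step \<Delta> S a"] by simp
qed auto

lemma foldl_closed:
  "q \<in> Q \<Longrightarrow> \<forall>q\<in>Q. \<forall>a\<in>\<Sigma>. \<delta> q a \<in> Q \<Longrightarrow> w \<in> lists \<Sigma> \<Longrightarrow> foldl \<delta> q w \<in> Q"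
  by (induction w arbitrary: q) auto

lemma set_step_closed:
  "S \<subseteq> U \<Longrightarrow> \<forall>q\<in>U. \<forall>a\<in>\<Sigma>. \<Delta> q a \<subseteq> U \<Longrightarrow> w \<in> lists \<Sigma> \<Longrightarrow> foldl (set_step \<Delta>) S w \<subseteq> U"
proof (induction w arbitrary: S)
  case (Cons a w)
  have "a \<in> \<Sigma>" "w \<in> lists \<Sigma>" using Cons.prems(3) by auto
  with Cons.prems(1,2) have "set_step \<Delta> S a \<subseteq> U" unfolding set_step_def by blast
  then show ?case using Cons.IH Cons.prems(2) \<open>w \<in> lists \<Sigma>\<close> by simp
qed simp

text \<open>Subset construction: a nondeterministic automaton with finitely many reachable
  states recognises a regular language. This is the only way regularity is
  established below.\<close>

lemma nfa_regular:
  fixes U :: "'q set" and \<Sigma> :: "'a set"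
  assumes "finite \<Sigma>" "finite U" "I \<subseteq> U" and closed: "\<forall>q\<in>U. \<forall>a\<in>\<Sigma>. \<Delta> q a \<subseteq> U"
  shows "regular \<Sigma> {w \<in> lists \<Sigma>. \<exists>q\<in>I. accepts \<Delta> F q w}"
proof -
  obtain enc :: "'q set \<Rightarrow> nat" and n where enc: "enc ` Pow U = {i. i < n}" "inj_on enc (Pow U)"
    using finite_imp_inj_to_nat_seg[of "Pow U"] assms(2) by blast
  define dec where "dec = inv_into (Pow U) enc"
  have dec_enc: "dec (enc S) = S" if "S \<subseteq> U" for S
    unfolding dec_def using enc(2) that by (simp add: inv_into_f_f)
  define \<delta> where "\<delta> = (\<lambda>k a. enc (set_step \<Delta> (dec k) a))"
  define FF where "FF = enc ` {S \<in> Pow U. S \<inter> F \<noteq> {}}"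
  have run: "foldl \<delta> (enc S) w = enc (foldl (set_step \<Delta>) S w)"
    if "S \<subseteq> U" "w \<in> lists \<Sigma>" for S w
    using that
  proof (induction w arbitrary: S)
    case (Cons a w)
    have "set_step \<Delta> S a \<subseteq> U" using Cons.prems closed by (auto simp: set_step_def)
    then show ?case using Cons by (simp add: \<delta>_def dec_enc)
  qed simp
  have "foldl \<delta> (enc I) w \<in> FF \<longleftrightarrow> (\<exists>q\<in>I. accepts \<Delta> F q w)" if w: "w \<in> lists \<Sigma>" for w
  proof -
    have "foldl (set_step \<Delta>) I w \<subseteq> U" using set_step_closed[OF assms(3) closed w] .
    then have "foldl \<delta> (enc I) w \<in> FF \<longleftrightarrow> foldl (set_step \<Delta>) I w \<inter> F \<noteq> {}"
      unfolding run[OF assms(3) w] FF_def by (subst inj_on_image_mem_iff[OF enc(2)]) auto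
    then show ?thesis unfolding accepts_from_set .
  qed
  then have "{w \<in> lists \<Sigma>. \<exists>q\<in>I. accepts \<Delta> F q w} = {w \<in> lists \<Sigma>. foldl \<delta> (enc I) w \<in> FF}"
    by auto
  moreover have "\<forall>k\<in>enc ` Pow U. \<forall>a\<in>\<Sigma>. \<delta> k a \<in> enc ` Pow U"
    using closed by (auto simp: \<delta>_def dec_enc set_step_def)
  moreover have "finite (enc ` Pow U)" "enc I \<in> enc ` Pow U" "FF \<subseteq> enc ` Pow U"
    using assms(2,3) by (auto simp: FF_def)
  ultimately show ?thesis
    unfolding regular_def using assms(1) by blast
qed

lemma regularE:
  assumes "regular \<Sigma> L"
  obtains Q q0 \<delta> F where "finite \<Sigma>" "finite (Q::nat set)" "q0 \<in> Q" "F \<subseteq> Q"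
    "\<forall>q\<in>Q. \<forall>a\<in>\<Sigma>. \<delta> q a \<in> Q" "L = {w \<in> lists \<Sigma>. foldl \<delta> q0 w \<in> F}"
  using assms unfolding regular_def by blast

lemma regular_subset: "regular \<Sigma> L \<Longrightarrow> L \<subseteq> lists \<Sigma>"
  unfolding regular_def by auto

lemma accepts_det: "accepts (\<lambda>q a. {\<delta> q a}) F q w \<longleftrightarrow> foldl \<delta> q w \<in> F"
  by (induction w arbitrary: q) auto

lemma regular_Int:
  assumes "regular \<Sigma> L1" "regular \<Sigma> L2"
  shows "regular \<Sigma> (L1 \<inter> L2)"
proof -
  obtain Q1 q1 \<delta>1 F1 where A: "finite \<Sigma>" "finite (Q1::nat set)" "q1 \<in> Q1" "F1 \<subseteq> Q1"
    "\<forall>q\<in>Q1. \<forall>a\<in>\<Sigma>. \<delta>1 q a \<in> Q1" "L1 = {w \<in> lists \<Sigma>. foldl \<delta>1 q1 w \<in> F1}"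
    using assms(1) by (rule regularE)
  obtain Q2 q2 \<delta>2 F2 where B: "finite (Q2::nat set)" "q2 \<in> Q2" "F2 \<subseteq> Q2"
    "\<forall>q\<in>Q2. \<forall>a\<in>\<Sigma>. \<delta>2 q a \<in> Q2" "L2 = {w \<in> lists \<Sigma>. foldl \<delta>2 q2 w \<in> F2}"
    using assms(2) by (rule regularE)
  define \<Delta> where "\<Delta> = (\<lambda>(p, q) a. {(\<delta>1 p a, \<delta>2 q a)})"
  have product: "accepts \<Delta> (F1 \<times> F2) (p, q) w \<longleftrightarrow> foldl \<delta>1 p w \<in> F1 \<and> foldl \<delta>2 q w \<in> F2"
    for p q w by (induction w arbitrary: p q) (auto simp: \<Delta>_def)
  have "regular \<Sigma> {w \<in> lists \<Sigma>. \<exists>s\<in>{(q1, q2)}. accepts \<Delta> (F1 \<times> F2) s w}"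
    by (rule nfa_regular[where U="Q1 \<times> Q2"]) (use A B in \<open>auto simp: \<Delta>_def\<close>)
  moreover have "L1 \<inter> L2 = {w \<in> lists \<Sigma>. \<exists>s\<in>{(q1, q2)}. accepts \<Delta> (F1 \<times> F2) s w}"
    unfolding A(6) B(5) using product by auto
  ultimately show ?thesis by simp
qed

text \<open>Reversal: run the automaton backwards from the final states.\<close>

lemma regular_rev:
  assumes "regular \<Sigma> L"
  shows "regular \<Sigma> (rev ` L)"
proof -
  obtain Q q0 \<delta> F where A: "finite \<Sigma>" "finite (Q::nat set)" "q0 \<in> Q" "F \<subseteq> Q"
    "\<forall>q\<in>Q. \<forall>a\<in>\<Sigma>. \<delta> q a \<in> Q" "L = {w \<in> lists \<Sigma>. foldl \<delta> q0 w \<in> F}"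
    using assms by (rule regularE)
  define \<Delta> where "\<Delta> = (\<lambda>q a. {p \<in> Q. \<delta> p a = q})"
  have backwards: "accepts \<Delta> {q0} q (rev w) \<longleftrightarrow> foldl \<delta> q0 w = q"
    if "w \<in> lists \<Sigma>" "q \<in> Q" for w q
    using that
  proof (induction w arbitrary: q rule: rev_induct)
    case (snoc a w)
    have "foldl \<delta> q0 w \<in> Q" using foldl_closed[OF A(3) A(5)] snoc.prems by simp
    then show ?case using snoc by (auto simp: \<Delta>_def)
  qed auto
  have "regular \<Sigma> {w \<in> lists \<Sigma>. \<exists>q\<in>F. accepts \<Delta> {q0} q w}"
    by (rule nfa_regular[where U=Q]) (use A(1,2,4) in \<open>auto simp: \<Delta>_def\<close>)
  moreover have "{w \<in> lists \<Sigma>. \<exists>q\<in>F. accepts \<Delta> {q0} q w} = rev ` L"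
  proof (intro equalityI subsetI)
    fix w assume "w \<in> {w \<in> lists \<Sigma>. \<exists>q\<in>F. accepts \<Delta> {q0} q w}"
    then obtain q where q: "q \<in> F" "accepts \<Delta> {q0} q w" and "w \<in> lists \<Sigma>" by auto
    then have w: "rev w \<in> lists \<Sigma>" by (simp add: in_lists_conv_set)
    then have "rev w \<in> L" using backwards[OF w, of q] q A(4,6) w by auto
    then show "w \<in> rev ` L" by force
  next
    fix w assume "w \<in> rev ` L"
    then obtain x where x: "x \<in> lists \<Sigma>" "foldl \<delta> q0 x \<in> F" "w = rev x" using A(6) by auto
    then have "accepts \<Delta> {q0} (foldl \<delta> q0 x) w"
      using backwards[OF x(1)] foldl_closed[OF A(3) A(5) x(1)] by simp
    then show "w \<in> {w \<in> lists \<Sigma>. \<exists>q\<in>F. accepts \<Delta> {q0} q w}" using x by auto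
  qed
  ultimately show ?thesis by simp
qed

lemma regular_preimage_map:
  assumes "regular \<Gamma> L" "finite \<Sigma>" "\<forall>a\<in>\<Sigma>. g a \<in> \<Gamma>"
  shows "regular \<Sigma> {w \<in> lists \<Sigma>. map g w \<in> L}"
proof -
  obtain Q q0 \<delta> F where A: "finite (Q::nat set)" "q0 \<in> Q" "F \<subseteq> Q"
    "\<forall>q\<in>Q. \<forall>a\<in>\<Gamma>. \<delta> q a \<in> Q" "L = {w \<in> lists \<Gamma>. foldl \<delta> q0 w \<in> F}"
    using assms(1) by (rule regularE)
  have "regular \<Sigma> {w \<in> lists \<Sigma>. \<exists>q\<in>{q0}. accepts (\<lambda>q a. {\<delta> q (g a)}) F q w}"
    by (rule nfa_regular[where U=Q]) (use A assms(2,3) in auto)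
  moreover have "{w \<in> lists \<Sigma>. map g w \<in> L} = {w \<in> lists \<Sigma>. foldl (\<lambda>q a. \<delta> q (g a)) q0 w \<in> F}"
    unfolding A(5) using assms(3) by (auto simp: foldl_map)
  ultimately show ?thesis using accepts_det[of "\<lambda>q a. \<delta> q (g a)"] by simp
qed

text \<open>The automaton below runs \<open>\<delta>\<close> in mode \<open>False\<close> and may switch, from a final state,
  to mode \<open>True\<close> in which it only reads \<open>e\<close>.\<close>

definition suffix_nfa :: "(nat \<Rightarrow> 'a \<Rightarrow> nat) \<Rightarrow> nat set \<Rightarrow> 'a \<Rightarrow> nat \<times> bool \<Rightarrow> 'a \<Rightarrow> (nat \<times> bool) set" where
  "suffix_nfa \<delta> F e = (\<lambda>(q, b) a. if b then (if a = e then {(q, True)} else {})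
       else {(\<delta> q a, False)} \<union> (if a = e \<and> q \<in> F then {(q, True)} else {}))"

lemma accepts_suffix_mode:
  "accepts (suffix_nfa \<delta> F e) (F \<times> UNIV) (q, True) w \<longleftrightarrow> q \<in> F \<and> w = replicate (length w) e"
  by (induction w) (auto simp: suffix_nfa_def)

lemma accepts_with_suffix:
  "accepts (suffix_nfa \<delta> F e) (F \<times> UNIV) (q, False) w \<longleftrightarrow>
     (\<exists>w1 k. w = w1 @ replicate k e \<and> foldl \<delta> q w1 \<in> F)"
proof (induction w arbitrary: q)
  case Nil
  then show ?case by auto
next
  case (Cons a w)
  let ?\<Delta> = "suffix_nfa \<delta> F e"
  have "accepts ?\<Delta> (F \<times> UNIV) (q, False) (a # w) \<longleftrightarrow>
      accepts ?\<Delta> (F \<times> UNIV) (\<delta> q a, False) w \<or> (a = e \<and> q \<in> F \<and> w = replicate (length w) e)"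
    using accepts_suffix_mode[of \<delta> F e] by (auto simp: suffix_nfa_def)
  also have "\<dots> \<longleftrightarrow> (\<exists>w1 k. a # w = w1 @ replicate k e \<and> foldl \<delta> q w1 \<in> F)"
  proof
    assume "accepts ?\<Delta> (F \<times> UNIV) (\<delta> q a, False) w \<or> (a = e \<and> q \<in> F \<and> w = replicate (length w) e)"
    then show "\<exists>w1 k. a # w = w1 @ replicate k e \<and> foldl \<delta> q w1 \<in> F"
    proof
      assume "accepts ?\<Delta> (F \<times> UNIV) (\<delta> q a, False) w"
      then obtain w1 k where "w = w1 @ replicate k e" "foldl \<delta> (\<delta> q a) w1 \<in> F" using Cons by blast
      then show ?thesis by (intro exI[of _ "a # w1"] exI[of _ k]) auto
    next
      assume "a = e \<and> q \<in> F \<and> w = replicate (length w) e"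
      then show ?thesis
        by (intro exI[of _ "[]"] exI[of _ "Suc (length w)"]) (metis append_Nil foldl_Nil replicate_Suc)
    qed
  next
    assume "\<exists>w1 k. a # w = w1 @ replicate k e \<and> foldl \<delta> q w1 \<in> F"
    then obtain w1 k where h: "a # w = w1 @ replicate k e" "foldl \<delta> q w1 \<in> F" by blast
    show "accepts ?\<Delta> (F \<times> UNIV) (\<delta> q a, False) w \<or> (a = e \<and> q \<in> F \<and> w = replicate (length w) e)"
    proof (cases w1)
      case Nil
      then show ?thesis using h by (cases k) auto
    next
      case (Cons b w1')
      then show ?thesis using h Cons.IH by auto
    qed
  qed
  finally show ?case .
qed

lemma regular_pad_suffix:
  assumes "regular \<Sigma> L" "e \<in> \<Sigma>"
  shows "regular \<Sigma> {w @ replicate k e | w k. w \<in> L}"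
proof -
  obtain Q q0 \<delta> F where A: "finite \<Sigma>" "finite (Q::nat set)" "q0 \<in> Q" "F \<subseteq> Q"
    "\<forall>q\<in>Q. \<forall>a\<in>\<Sigma>. \<delta> q a \<in> Q" "L = {w \<in> lists \<Sigma>. foldl \<delta> q0 w \<in> F}"
    using assms(1) by (rule regularE)
  have "regular \<Sigma> {w \<in> lists \<Sigma>. \<exists>s\<in>{(q0, False)}. accepts (suffix_nfa \<delta> F e) (F \<times> UNIV) s w}"
    by (rule nfa_regular[where U="Q \<times> UNIV"]) (use A(1,2,3,5) in \<open>auto simp: suffix_nfa_def\<close>)
  moreover have "{w \<in> lists \<Sigma>. \<exists>s\<in>{(q0, False)}. accepts (suffix_nfa \<delta> F e) (F \<times> UNIV) s w}
      = {w @ replicate k e | w k. w \<in> L}"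
    unfolding A(6) using assms(2) by (fastforce simp: accepts_with_suffix)
  ultimately show ?thesis by simp
qed

text \<open>Pigeonhole: a run on a word longer than the number of states revisits a state.\<close>

lemma run_repeats_state:
  assumes "finite Q" "q \<in> Q" "\<forall>q\<in>Q. \<forall>a\<in>\<Sigma>. \<delta> q a \<in> Q" "z \<in> lists \<Sigma>" "card Q < length z"
  obtains k1 k2 where "k1 < k2" "k2 \<le> length z" "foldl \<delta> q (take k1 z) = foldl \<delta> q (take k2 z)"
proof -
  let ?run = "\<lambda>k. foldl \<delta> q (take k z)"
  have "?run ` {..length z} \<subseteq> Q"
    using foldl_closed[OF assms(2,3)] assms(4) by (auto dest: in_set_takeD)
  then have "\<not> inj_on ?run {..length z}"
    using card_inj_on_le[of ?run "{..length z}" Q] assms(1,5) by auto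
  then obtain i j where "i \<le> length z" "j \<le> length z" "i \<noteq> j" "?run i = ?run j"
    unfolding inj_on_def by auto
  then show thesis using that[of i j] that[of j i] by (cases "i < j") auto
qed

text \<open>Every state from which a final state is reachable reaches one by a word of
  length at most the number of states; this bounds the "lookahead" needed in the
  substitution lemma below.\<close>

lemma short_accepted_word:
  assumes "finite Q" "q \<in> Q" "\<forall>q\<in>Q. \<forall>a\<in>\<Sigma>. \<delta> q a \<in> Q" "z \<in> lists \<Sigma>" "foldl \<delta> q z \<in> F"
  shows "\<exists>z'\<in>lists \<Sigma>. length z' \<le> card Q \<and> foldl \<delta> q z' \<in> F"
  using assms(4,5)
proof (induction "length z" arbitrary: z rule: less_induct)
  case less
  show ?case
  proof (cases "length z \<le> card Q")
    case False
    then obtain k1 k2 where k: "k1 < k2" "k2 \<le> length z"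
      "foldl \<delta> q (take k1 z) = foldl \<delta> q (take k2 z)"
      using run_repeats_state[OF assms(1-3) less.prems(1)] by auto
    define z' where "z' = take k1 z @ drop k2 z"
    have "foldl \<delta> q z' = foldl \<delta> q (take k2 z @ drop k2 z)"
      unfolding z'_def foldl_append k(3) ..
    then have "foldl \<delta> q z' \<in> F" using less.prems(2) by simp
    moreover have "length z' < length z" "z' \<in> lists \<Sigma>"
      using k less.prems(1) by (auto simp: z'_def dest: in_set_takeD in_set_dropD)
    ultimately show ?thesis using less.hyps by blast
  qed (use less.prems in blast)
qed

section \<open>Padded pairs of words\<close>

fun opt_list :: "'a option \<Rightarrow> 'a list" where
  "opt_list None = []"
| "opt_list (Some a) = [a]"

definition strip :: "'a option list \<Rightarrow> 'a list" where
  "strip xs = concat (map opt_list xs)"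

lemma strip_simps [simp]:
  "strip [] = []" "strip (a # xs) = opt_list a @ strip xs" "strip (xs @ ys) = strip xs @ strip ys"
  "strip (map Some x) = x" "strip (replicate k None) = []"
  unfolding strip_def by (induction x; simp) (induction k; simp)+

lemma length_strip: "length (strip xs) \<le> length xs"
proof (induction xs)
  case (Cons a xs)
  then show ?case by (cases a) auto
qed simp

lemma strip_lists: "xs \<in> lists (insert None (Some ` B)) \<Longrightarrow> strip xs \<in> lists B"
  by (induction xs) auto

lemma pair_alph_components:
  "z \<in> lists (pair_alph B) \<Longrightarrow>
     map fst z \<in> lists (insert None (Some ` B)) \<and> map snd z \<in> lists (insert None (Some ` B))"
proof (induction z)
  case (Cons p z)
  then show ?case by (cases p) (auto simp: pair_alph_def)
qed simp

lemma pair_alph_iff: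
  "(a, b) \<in> pair_alph C \<longleftrightarrow> a \<in> insert None (Some ` C) \<and> b \<in> insert None (Some ` C)"
  by (simp only: pair_alph_def mem_Times_iff fst_conv snd_conv)

lemma finite_pair_alph: "finite C \<Longrightarrow> finite (pair_alph C)"
  unfolding pair_alph_def by simp

lemma length_padR [simp]: "length (padR x y) = max (length x) (length y)"
  unfolding padR_def by simp

lemma padR_fst: "map fst (padR x y) = map Some x @ replicate (length y - length x) None"
  unfolding padR_def by (simp add: map_fst_zip)

lemma padR_snd: "map snd (padR x y) = map Some y @ replicate (length x - length y) None"
  unfolding padR_def by (simp add: map_snd_zip)

lemma strip_fst_padR [simp]: "strip (map fst (padR x y)) = x"
  by (simp add: padR_fst)

lemma strip_snd_padR [simp]: "strip (map snd (padR x y)) = y"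
  by (simp add: padR_snd)

lemma padR_inj: "padR x y = padR x' y' \<Longrightarrow> x = x' \<and> y = y'"
  by (metis strip_fst_padR strip_snd_padR)

lemma padR_Cons [simp]: "padR (a # x) (b # y) = (Some a, Some b) # padR x y"
  unfolding padR_def by simp

lemma padR_Nil1 [simp]: "padR [] y = map (\<lambda>b. (None, Some b)) y"
  unfolding padR_def by (simp add: zip_replicate1)

lemma padR_Nil2 [simp]: "padR x [] = map (\<lambda>a. (Some a, None)) x"
  unfolding padR_def by (simp add: zip_replicate2)

lemma padR_diag: "padR x x = map (\<lambda>c. (Some c, Some c)) x"
  by (induction x) auto

lemma take_padR: "take i (padR x y) = padR (take i x) (take i y)"
proof (induction x arbitrary: y i)
  case (Cons a x)
  then show ?case by (cases y; cases i) (auto simp: take_map)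
qed (simp add: take_map)

lemma padR_lists: "padR x y \<in> lists (pair_alph C) \<longleftrightarrow> x \<in> lists C \<and> y \<in> lists C"
proof (induction x arbitrary: y)
  case (Cons a x)
  then show ?case by (cases y) (auto simp: pair_alph_def)
qed (auto simp: pair_alph_def)

lemma padL_rev: "padL u v = rev (padR (rev u) (rev v))"
  unfolding padL_def padR_def by (simp add: rev_map zip_rev[symmetric])

lemma rev_padL: "rev (padL u v) = padR (rev u) (rev v)"
  by (simp add: padL_rev)

lemma padR_lists_of_regular:
  assumes "regular (pair_alph C) ((\<lambda>(x, y). padR x y) ` R)"
  shows "R \<subseteq> lists C \<times> lists C"
proof (intro subsetI)
  fix p assume "p \<in> R"
  then have "padR (fst p) (snd p) \<in> lists (pair_alph C)"
    using regular_subset[OF assms] by (auto simp: case_prod_beta)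
  then show "p \<in> lists C \<times> lists C" unfolding padR_lists by (simp add: mem_Times_iff)
qed

text \<open>The set of all right-padded pairs of words over \<open>C\<close> is regular. The automaton
  has state 0 while both words continue, and states 1/2 once only the second/first
  word continues.\<close>

fun shape_nfa :: "nat \<Rightarrow> ('c option \<times> 'c option) \<Rightarrow> nat set" where
  "shape_nfa 0 (Some a, Some b) = {0}"
| "shape_nfa 0 (None, Some b) = {1}"
| "shape_nfa 0 (Some a, None) = {2}"
| "shape_nfa (Suc 0) (None, Some b) = {1}"
| "shape_nfa (Suc (Suc 0)) (Some a, None) = {2}"
| "shape_nfa _ _ = {}"

lemma shape_nfa_1: "accepts shape_nfa {0, 1, 2} 1 w \<longleftrightarrow> (\<exists>y. w = map (\<lambda>b. (None, Some b)) y)"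
proof (induction w)
  case (Cons c w)
  obtain \<alpha> \<beta> where c: "c = (\<alpha>, \<beta>)" by force
  show ?case
  proof (cases \<alpha>; cases \<beta>)
    fix b assume "\<alpha> = None" "\<beta> = Some b"
    then show ?thesis using Cons c by (auto simp: Cons_eq_map_conv)
  qed (use c in \<open>auto simp: Cons_eq_map_conv\<close>)
qed auto

lemma shape_nfa_2: "accepts shape_nfa {0, 1, 2} 2 w \<longleftrightarrow> (\<exists>x. w = map (\<lambda>a. (Some a, None)) x)"
proof (induction w)
  case (Cons c w)
  obtain \<alpha> \<beta> where c: "c = (\<alpha>, \<beta>)" by force
  show ?case
  proof (cases \<alpha>; cases \<beta>)
    fix a assume "\<alpha> = Some a" "\<beta> = None"
    then show ?thesis using Cons c by (auto simp: Cons_eq_map_conv numeral_2_eq_2)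
  qed (use c in \<open>auto simp: Cons_eq_map_conv numeral_2_eq_2\<close>)
qed auto

lemma shape_nfa_0: "accepts shape_nfa {0, 1, 2} 0 w \<longleftrightarrow> (\<exists>x y. w = padR x y)"
proof
  show "accepts shape_nfa {0, 1, 2} 0 w \<Longrightarrow> \<exists>x y. w = padR x y"
  proof (induction w)
    case Nil
    then show ?case by (intro exI[of _ "[]"]) auto
  next
    case (Cons c w)
    obtain \<alpha> \<beta> where c: "c = (\<alpha>, \<beta>)" by force
    show ?case
    proof (cases \<alpha>)
      case None
      then obtain b where b: "\<beta> = Some b" using Cons.prems c by (cases \<beta>) auto
      then have "accepts shape_nfa {0, 1, 2} 1 w" using Cons.prems c None by auto
      then obtain y where "w = map (\<lambda>b. (None, Some b)) y" using shape_nfa_1 by auto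
      then show ?thesis using c None b by (intro exI[of _ "[]"] exI[of _ "b # y"]) auto
    next
      case (Some a)
      show ?thesis
      proof (cases \<beta>)
        case None
        then have "accepts shape_nfa {0, 1, 2} 2 w" using Cons.prems c Some by (auto simp: numeral_2_eq_2)
        then obtain x where "w = map (\<lambda>a. (Some a, None)) x" using shape_nfa_2 by auto
        then show ?thesis using c None Some by (intro exI[of _ "a # x"] exI[of _ "[]"]) auto
      next
        case (Some b)
        then have "accepts shape_nfa {0, 1, 2} 0 w" using Cons.prems c \<open>\<alpha> = Some a\<close> by auto
        then obtain x y where "w = padR x y" using Cons.IH by auto
        then show ?thesis using c Some \<open>\<alpha> = Some a\<close> by (intro exI[of _ "a # x"] exI[of _ "b # y"]) auto
      qed
    qed
  qed
next
  assume "\<exists>x y. w = padR x y"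
  then obtain x y where w: "w = padR x y" by auto
  have "accepts shape_nfa {0, 1, 2} 0 (padR x y)"
  proof (induction x arbitrary: y)
    case Nil
    then show ?case using shape_nfa_1 by (cases y) auto
  next
    case (Cons a x)
    then show ?case using shape_nfa_2 by (cases y) (auto simp: numeral_2_eq_2)
  qed
  then show "accepts shape_nfa {0, 1, 2} 0 w" using w by simp
qed

lemma regular_padded_pairs:
  assumes "finite C"
  shows "regular (pair_alph C) ((\<lambda>(x, y). padR x y) ` (lists C \<times> lists C))"
proof -
  have "regular (pair_alph C) {w \<in> lists (pair_alph C). \<exists>q\<in>{0}. accepts shape_nfa {0, 1, 2} q w}"
  proof (rule nfa_regular[where U="{0, 1, 2}"])
    show "\<forall>q\<in>{0, 1, 2}. \<forall>a\<in>pair_alph C. shape_nfa q a \<subseteq> {0, 1, 2}"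
    proof (intro ballI)
      fix q and a :: "'a option \<times> 'a option"
      show "shape_nfa q a \<subseteq> {0, 1, 2}" by (induction q a rule: shape_nfa.induct) auto
    qed
  qed (auto simp: finite_pair_alph assms)
  moreover have "{w \<in> lists (pair_alph C). \<exists>q\<in>{0}. accepts shape_nfa {0, 1, 2} q w}
      = (\<lambda>(x, y). padR x y) ` (lists C \<times> lists C)"
  proof (intro equalityI subsetI)
    fix w assume "w \<in> {w \<in> lists (pair_alph C). \<exists>q\<in>{0}. accepts shape_nfa {0, 1, 2} q w}"
    then have "w \<in> lists (pair_alph C)" "accepts shape_nfa {0, 1, 2} 0 w" by auto
    then obtain x y where "w = padR x y" "padR x y \<in> lists (pair_alph C)"
      using shape_nfa_0[of w] by auto
    then show "w \<in> (\<lambda>(x, y). padR x y) ` (lists C \<times> lists C)" by (auto simp: padR_lists)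
  next
    fix w assume "w \<in> (\<lambda>(x, y). padR x y) ` (lists C \<times> lists C)"
    then obtain x y where w: "w = padR x y" "x \<in> lists C" "y \<in> lists C" by auto
    then have "accepts shape_nfa {0, 1, 2} 0 w" using shape_nfa_0[of w] by auto
    then show "w \<in> {w \<in> lists (pair_alph C). \<exists>q\<in>{0}. accepts shape_nfa {0, 1, 2} q w}"
      using w by (auto simp: padR_lists)
  qed
  ultimately show ?thesis by simp
qed

section \<open>Composition of padded relations\<close>

text \<open>Reading pairs \<open>(a, c)\<close>, this automaton guesses a middle letter \<open>b\<close> and runs one
  automaton on the pairs \<open>(a, b)\<close> and another on the pairs \<open>(b, c)\<close>.\<close>

definition guess_nfa ::
  "(nat \<Rightarrow> 'a \<times> 'b \<Rightarrow> nat) \<Rightarrow> (nat \<Rightarrow> 'b \<times> 'c \<Rightarrow> nat) \<Rightarrow> 'b set \<Rightarrow> nat \<times> nat \<Rightarrow> 'a \<times> 'c \<Rightarrow> (nat \<times> nat) set"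
where
  "guess_nfa \<delta>1 \<delta>2 A = (\<lambda>(p, q) (a, c). {(\<delta>1 p (a, b), \<delta>2 q (b, c)) | b. b \<in> A})"

lemma accepts_guess_nfa:
  "accepts (guess_nfa \<delta>1 \<delta>2 A) (F1 \<times> F2) (p, q) w \<longleftrightarrow>
     (\<exists>bs. length bs = length w \<and> bs \<in> lists A \<and> foldl \<delta>1 p (zip (map fst w) bs) \<in> F1 \<and>
        foldl \<delta>2 q (zip bs (map snd w)) \<in> F2)"
proof (induction w arbitrary: p q)
  case (Cons ac w)
  obtain a c where ac: "ac = (a, c)" by force
  have "accepts (guess_nfa \<delta>1 \<delta>2 A) (F1 \<times> F2) (p, q) (ac # w) \<longleftrightarrow>
      (\<exists>b\<in>A. accepts (guess_nfa \<delta>1 \<delta>2 A) (F1 \<times> F2) (\<delta>1 p (a, b), \<delta>2 q (b, c)) w)"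
    using ac by (auto simp: guess_nfa_def)
  then show ?case unfolding Cons.IH using ac by (fastforce simp: length_Suc_conv)
qed auto

lemma zip_in_pair_alph:
  "length u = length v \<Longrightarrow>
     zip u v \<in> lists (pair_alph C) \<longleftrightarrow> u \<in> lists (insert None (Some ` C)) \<and> v \<in> lists (insert None (Some ` C))"
  by (induction u v rule: list_induct2) (auto simp: pair_alph_iff)

lemma padR_through_middle:
  assumes "length x \<le> length y" "length y \<le> length z"
  defines "bs \<equiv> map Some y @ replicate (length z - length y) None"
  shows "zip (map fst (padR x z)) bs = padR x y @ replicate (length z - length y) (None, None)"
    and "zip bs (map snd (padR x z)) = padR y z"
proof -
  let ?gap = "replicate (length z - length y) None"
  have "map Some x @ replicate (length z - length x) None =
        (map Some x @ replicate (length y - length x) None) @ ?gap"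
    using assms(1,2) by (simp add: replicate_add[symmetric])
  moreover have "length (map Some x @ replicate (length y - length x) None) = length (map Some y)"
    using assms(1) by simp
  ultimately have "zip (map fst (padR x z)) bs =
      zip (map Some x @ replicate (length y - length x) None) (map Some y) @ zip ?gap ?gap"
    unfolding bs_def padR_fst by (simp only: zip_append)
  then show "zip (map fst (padR x z)) bs = padR x y @ replicate (length z - length y) (None, None)"
    using assms(1) by (simp add: padR_def zip_replicate)
  show "zip bs (map snd (padR x z)) = padR y z"
    unfolding bs_def padR_snd using assms(1,2) by (simp add: padR_def)
qed

lemma padR_comp_iff_middle_track:
  assumes mono1: "\<forall>(x, y)\<in>R1. length x \<le> length y" and mono2: "\<forall>(x, y)\<in>R2. length x \<le> length y"
  shows "padR x z \<in> (\<lambda>(x, y). padR x y) ` (R1 O R2) \<longleftrightarrow>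
    (\<exists>bs. length bs = length (padR x z) \<and>
       zip (map fst (padR x z)) bs \<in> {w @ replicate k (None, None) | w k. w \<in> (\<lambda>(x, y). padR x y) ` R1} \<and>
       zip bs (map snd (padR x z)) \<in> (\<lambda>(x, y). padR x y) ` R2)"
    (is "?lhs \<longleftrightarrow> ?rhs")
proof
  assume ?lhs
  then obtain y where xyz: "(x, y) \<in> R1" "(y, z) \<in> R2" by (auto dest: padR_inj)
  then have "length x \<le> length y" "length y \<le> length z" using mono1 mono2 by auto
  note split = padR_through_middle[OF this]
  define bs where "bs = map Some y @ replicate (length z - length y) None"
  have "length bs = length (padR x z)"
    using \<open>length x \<le> length y\<close> \<open>length y \<le> length z\<close> by (simp add: bs_def)
  moreover have "zip (map fst (padR x z)) bs \<in> {w @ replicate k (None, None) | w k. w \<in> (\<lambda>(x, y). padR x y) ` R1}"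
    using split(1) xyz(1) unfolding bs_def by blast
  moreover have "zip bs (map snd (padR x z)) \<in> (\<lambda>(x, y). padR x y) ` R2"
    using split(2) xyz(2) unfolding bs_def by (simp add: image_iff bexI[of _ "(y, z)"])
  ultimately show ?rhs by blast
next
  assume ?rhs
  then obtain bs x' y k y' z' where bs: "length bs = length (padR x z)"
    and p1: "(x', y) \<in> R1" "zip (map fst (padR x z)) bs = padR x' y @ replicate k (None, None)"
    and p2: "(y', z') \<in> R2" "zip bs (map snd (padR x z)) = padR y' z'" by auto
  have "x' = strip (map fst (zip (map fst (padR x z)) bs))" using p1(2) by simp
  also have "\<dots> = x" using bs by simp
  finally have "x' = x" .
  have "y = strip (map snd (zip (map fst (padR x z)) bs))" using p1(2) by simp
  also have "\<dots> = strip (map fst (zip bs (map snd (padR x z))))" using bs by simp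
  also have "\<dots> = y'" using p2(2) by simp
  finally have "y = y'" .
  have "z' = strip (map snd (zip bs (map snd (padR x z))))" using p2(2) by simp
  also have "\<dots> = z" using bs by simp
  finally have "z' = z" .
  show ?lhs using p1(1) p2(1) \<open>x' = x\<close> \<open>y = y'\<close> \<open>z' = z\<close> by force
qed

lemma accepts_guess_nfa_iff:
  assumes P1: "P1 = {w \<in> lists (pair_alph C). foldl \<delta>1 q1 w \<in> F1}"
    and P2: "P2 = {w \<in> lists (pair_alph C). foldl \<delta>2 q2 w \<in> F2}"
    and w: "w \<in> lists (pair_alph C)"
  shows "accepts (guess_nfa \<delta>1 \<delta>2 (insert None (Some ` C))) (F1 \<times> F2) (q1, q2) w \<longleftrightarrow>
    (\<exists>bs. length bs = length w \<and> zip (map fst w) bs \<in> P1 \<and> zip bs (map snd w) \<in> P2)"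
proof -
  have "zip (map fst w) bs \<in> lists (pair_alph C) \<longleftrightarrow> bs \<in> lists (insert None (Some ` C))"
    "zip bs (map snd w) \<in> lists (pair_alph C) \<longleftrightarrow> bs \<in> lists (insert None (Some ` C))"
    if "length bs = length w" for bs
    using zip_in_pair_alph[of "map fst w" bs C] zip_in_pair_alph[of bs "map snd w" C]
      pair_alph_components[OF w] that by simp_all
  then show ?thesis unfolding accepts_guess_nfa P1 P2 by blast
qed

lemma regular_padR_comp:
  assumes finC: "finite C"
    and reg1: "regular (pair_alph C) ((\<lambda>(x, y). padR x y) ` R1)"
    and reg2: "regular (pair_alph C) ((\<lambda>(x, y). padR x y) ` R2)"
    and mono1: "\<forall>(x, y)\<in>R1. length x \<le> length y" and mono2: "\<forall>(x, y)\<in>R2. length x \<le> length y"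
  shows "regular (pair_alph C) ((\<lambda>(x, y). padR x y) ` (R1 O R2))"
proof -
  define P1 where "P1 = {w @ replicate k (None, None) | w k. w \<in> (\<lambda>(x, y). padR x y) ` R1}"
  define P2 where "P2 = (\<lambda>(x, y). padR x y) ` R2"
  have "regular (pair_alph C) P1"
    unfolding P1_def by (rule regular_pad_suffix[OF reg1]) (simp add: pair_alph_def)
  then obtain Q1 q1 \<delta>1 F1 where A: "finite (Q1::nat set)" "q1 \<in> Q1" "F1 \<subseteq> Q1"
    "\<forall>q\<in>Q1. \<forall>a\<in>pair_alph C. \<delta>1 q a \<in> Q1" "P1 = {w \<in> lists (pair_alph C). foldl \<delta>1 q1 w \<in> F1}"
    by (rule regularE)
  obtain Q2 q2 \<delta>2 F2 where B: "finite (Q2::nat set)" "q2 \<in> Q2" "F2 \<subseteq> Q2"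
    "\<forall>q\<in>Q2. \<forall>a\<in>pair_alph C. \<delta>2 q a \<in> Q2" "P2 = {w \<in> lists (pair_alph C). foldl \<delta>2 q2 w \<in> F2}"
    using reg2 unfolding P2_def by (rule regularE)
  define W where "W = {w \<in> lists (pair_alph C).
    \<exists>s\<in>{(q1, q2)}. accepts (guess_nfa \<delta>1 \<delta>2 (insert None (Some ` C))) (F1 \<times> F2) s w}"
  have "regular (pair_alph C) W" unfolding W_def
    by (rule nfa_regular[where U="Q1 \<times> Q2"])
       (use A B finC in \<open>auto simp: guess_nfa_def pair_alph_def finite_pair_alph\<close>)
  moreover have "(\<lambda>(x, y). padR x y) ` (R1 O R2) = W \<inter> (\<lambda>(x, y). padR x y) ` (lists C \<times> lists C)"
  proof (intro equalityI subsetI)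
    fix w assume w: "w \<in> (\<lambda>(x, y). padR x y) ` (R1 O R2)"
    then obtain x y z where "(x, y) \<in> R1" "(y, z) \<in> R2" and xz: "w = padR x z" by auto
    then have "x \<in> lists C" "z \<in> lists C"
      using padR_lists_of_regular[OF reg1] padR_lists_of_regular[OF reg2] by auto
    then show "w \<in> W \<inter> (\<lambda>(x, y). padR x y) ` (lists C \<times> lists C)"
      using w accepts_guess_nfa_iff[OF A(5) B(5)] padR_comp_iff_middle_track[OF mono1 mono2]
      unfolding W_def xz P1_def P2_def by (auto simp: padR_lists)
  next
    fix w assume "w \<in> W \<inter> (\<lambda>(x, y). padR x y) ` (lists C \<times> lists C)"
    then obtain x z where w: "w = padR x z" "w \<in> lists (pair_alph C)"
      and "accepts (guess_nfa \<delta>1 \<delta>2 (insert None (Some ` C))) (F1 \<times> F2) (q1, q2) w"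
      unfolding W_def by auto
    then show "w \<in> (\<lambda>(x, y). padR x y) ` (R1 O R2)"
      using accepts_guess_nfa_iff[OF A(5) B(5) w(2)] padR_comp_iff_middle_track[OF mono1 mono2]
      unfolding w(1) P1_def P2_def by blast
  qed
  ultimately show ?thesis using regular_Int regular_padded_pairs[OF finC] by metis
qed

text \<open>The same for left padding, by reversing all words.\<close>

definition rev_rel :: "('a list \<times> 'a list) set \<Rightarrow> ('a list \<times> 'a list) set" where
  "rev_rel R = (\<lambda>(x, y). (rev x, rev y)) ` R"

lemma padR_rev_rel: "(\<lambda>(x, y). padR x y) ` rev_rel R = rev ` ((\<lambda>(x, y). padL x y) ` R)"
  unfolding rev_rel_def image_image by (simp add: rev_padL case_prod_beta)

lemma rev_rel_comp: "rev_rel (R1 O R2) = rev_rel R1 O rev_rel R2"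
proof (intro equalityI subsetI)
  fix p assume "p \<in> rev_rel (R1 O R2)"
  then obtain x y z where "(x, y) \<in> R1" "(y, z) \<in> R2" "p = (rev x, rev z)" unfolding rev_rel_def by auto
  then show "p \<in> rev_rel R1 O rev_rel R2" unfolding rev_rel_def by (auto intro!: relcompI[of _ "rev y"])
next
  fix p assume "p \<in> rev_rel R1 O rev_rel R2"
  then obtain x y z where "(x, y) \<in> R1" "(y, z) \<in> R2" "p = (rev x, rev z)"
    unfolding rev_rel_def by auto
  then show "p \<in> rev_rel (R1 O R2)" unfolding rev_rel_def by auto
qed

lemma regular_padL_comp:
  assumes finC: "finite C"
    and reg1: "regular (pair_alph C) ((\<lambda>(x, y). padL x y) ` R1)"
    and reg2: "regular (pair_alph C) ((\<lambda>(x, y). padL x y) ` R2)"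
    and mono1: "\<forall>(x, y)\<in>R1. length x \<le> length y" and mono2: "\<forall>(x, y)\<in>R2. length x \<le> length y"
  shows "regular (pair_alph C) ((\<lambda>(x, y). padL x y) ` (R1 O R2))"
proof -
  have mono_rev: "\<forall>(x, y)\<in>rev_rel R. length x \<le> length y" if "\<forall>(x, y)\<in>R. length x \<le> length y" for R
    using that by (auto simp: rev_rel_def)
  have "regular (pair_alph C) ((\<lambda>(x, y). padR x y) ` (rev_rel R1 O rev_rel R2))"
    by (rule regular_padR_comp[OF finC _ _ mono_rev[OF mono1] mono_rev[OF mono2]])
       (simp_all only: padR_rev_rel regular_rev[OF reg1] regular_rev[OF reg2])
  then have "regular (pair_alph C) (rev ` rev ` ((\<lambda>(x, y). padL x y) ` (R1 O R2)))"
    unfolding rev_rel_comp[symmetric] padR_rev_rel by (rule regular_rev)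
  then show ?thesis by (simp add: image_image)
qed

section \<open>Substitutions with bounded length difference\<close>

definition subst :: "('b \<Rightarrow> 'c list) \<Rightarrow> 'b list \<Rightarrow> 'c list" where
  "subst \<tau> u = concat (map \<tau> u)"

lemma subst_simps [simp]:
  "subst \<tau> [] = []" "subst \<tau> (b # u) = \<tau> b @ subst \<tau> u" "subst \<tau> (u @ v) = subst \<tau> u @ subst \<tau> v"
  unfolding subst_def by simp_all

lemma subst_lists: "\<forall>b\<in>B. \<tau> b \<in> lists C \<Longrightarrow> u \<in> lists B \<Longrightarrow> subst \<tau> u \<in> lists C"
  by (induction u) auto

lemma length_subst_le: "\<forall>b\<in>B. length (\<tau> b) \<le> M \<Longrightarrow> u \<in> lists B \<Longrightarrow> length (subst \<tau> u) \<le> M * length u"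
  by (induction u) auto

lemma subst_rev: "subst (\<lambda>b. rev (\<tau> b)) (rev u) = rev (subst \<tau> u)"
  by (induction u) auto

text \<open>We build an automaton for the padded encoding of \<open>\<tau>(S)\<close>. Its configurations
  consist of a state of the given automaton and two output buffers: it silently reads
  columns of a guessed padded pair \<open>(u, v)\<close>, appends their images to the buffers,
  and reads an input column by removing it from the fronts of the buffers. Because
  the given automaton can always be completed to acceptance within \<open>card Q\<close> further
  columns, the images of prefixes \<open>take i u\<close> and \<open>take i v\<close> differ in length by a bounded
  amount, so bounded buffers suffice and there are finitely many configurations.\<close>

locale subst_automaton =
  fixes B :: "'b set" and C :: "'c set" and S :: "('b list \<times> 'b list) set"
    and \<tau> :: "'b \<Rightarrow> 'c list" and K :: nat
    and Q :: "nat set" and q0 :: nat and \<delta> :: "nat \<Rightarrow> ('b option \<times> 'b option) \<Rightarrow> nat" and F :: "nat set"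
  assumes finB: "finite B" and finC: "finite C" and S_lists: "S \<subseteq> lists B \<times> lists B"
    and \<tau>_lists: "\<forall>b\<in>B. \<tau> b \<in> lists C"
    and finQ: "finite Q" and q0Q: "q0 \<in> Q"
    and \<delta>Q: "\<forall>q\<in>Q. \<forall>a\<in>pair_alph B. \<delta> q a \<in> Q"
    and S_lang: "(\<lambda>(u, v). padR u v) ` S = {w \<in> lists (pair_alph B). foldl \<delta> q0 w \<in> F}"
    and length_diff: "\<forall>(u, v)\<in>S. length (subst \<tau> u) \<le> length (subst \<tau> v) + K \<and>
                                   length (subst \<tau> v) \<le> length (subst \<tau> u) + K"
begin

text \<open>\<open>M\<close> bounds the length of the image of a letter, \<open>drift\<close> the length difference of the
  images of prefixes of related words, and \<open>bound\<close> the length of the buffers.\<close>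

definition M :: nat where "M = Max (insert 0 ((\<lambda>b. length (\<tau> b)) ` B))"
definition drift :: nat where "drift = K + card Q * M"
definition bound :: nat where "bound = drift + M"

lemma length_\<tau>_le: "\<forall>b\<in>B. length (\<tau> b) \<le> M"
  unfolding M_def using finB by (auto intro: Max_ge)

lemma length_subst_opt: "a \<in> insert None (Some ` B) \<Longrightarrow> length (subst \<tau> (opt_list a)) \<le> M"
  using length_\<tau>_le by auto

lemma padR_in_S_lang: "(u, v) \<in> S \<Longrightarrow> padR u v \<in> lists (pair_alph B) \<and> foldl \<delta> q0 (padR u v) \<in> F"
  using S_lang by (metis (no_types, lifting) case_prod_conv image_eqI mem_Collect_eq)

lemma short_completion:
  assumes "(u, v) \<in> S"
  obtains a b where "(take i u @ a, take i v @ b) \<in> S" "a \<in> lists B" "b \<in> lists B"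
    "length a \<le> card Q" "length b \<le> card Q"
proof -
  define z where "z = padR u v"
  have zl: "z \<in> lists (pair_alph B)" and zF: "foldl \<delta> q0 z \<in> F"
    using padR_in_S_lang[OF assms] z_def by auto
  define s where "s = foldl \<delta> q0 (take i z)"
  have lists_take_drop: "take i z \<in> lists (pair_alph B)" "drop i z \<in> lists (pair_alph B)"
    using zl by (auto dest: in_set_takeD in_set_dropD)
  have "s \<in> Q" unfolding s_def using foldl_closed[OF q0Q \<delta>Q lists_take_drop(1)] .
  moreover have "foldl \<delta> s (drop i z) \<in> F" unfolding s_def using zF by (simp flip: foldl_append)
  ultimately obtain z' where z': "z' \<in> lists (pair_alph B)" "length z' \<le> card Q" "foldl \<delta> s z' \<in> F"
    using short_accepted_word[OF finQ _ \<delta>Q lists_take_drop(2)] by blast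
  have "take i z @ z' \<in> (\<lambda>(u, v). padR u v) ` S"
    unfolding S_lang using lists_take_drop z' by (simp add: s_def)
  then obtain u' v' where uv': "(u', v') \<in> S" "padR u' v' = padR (take i u) (take i v) @ z'"
    unfolding z_def take_padR by auto
  have "u' = take i u @ strip (map fst z')" "v' = take i v @ strip (map snd z')"
    using arg_cong[OF uv'(2), of "\<lambda>w. strip (map fst w)"] arg_cong[OF uv'(2), of "\<lambda>w. strip (map snd w)"]
    by simp_all
  moreover have "strip (map fst z') \<in> lists B" "strip (map snd z') \<in> lists B"
    using strip_lists[of "map fst z'" B] strip_lists[of "map snd z'" B] pair_alph_components[OF z'(1)]
    by blast+
  moreover have "length (strip (map fst z')) \<le> card Q" "length (strip (map snd z')) \<le> card Q"
    using length_strip[of "map fst z'"] length_strip[of "map snd z'"] z'(2) by auto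
  ultimately show thesis using that uv'(1) by metis
qed

lemma prefix_drift:
  assumes "(u, v) \<in> S"
  shows "length (subst \<tau> (take i u)) \<le> length (subst \<tau> (take i v)) + drift \<and>
         length (subst \<tau> (take i v)) \<le> length (subst \<tau> (take i u)) + drift"
proof -
  obtain a b where ab: "(take i u @ a, take i v @ b) \<in> S" "a \<in> lists B" "b \<in> lists B"
    "length a \<le> card Q" "length b \<le> card Q"
    using short_completion[OF assms] .
  have "length (subst \<tau> a) \<le> card Q * M" "length (subst \<tau> b) \<le> card Q * M"
    using length_subst_le[OF length_\<tau>_le ab(2)] length_subst_le[OF length_\<tau>_le ab(3)] ab(4,5)
    by (metis le_trans mult.commute mult_le_mono2)+
  then show ?thesis using length_diff ab(1) unfolding drift_def by fastforce
qed

definition configs :: "(nat \<times> 'c list \<times> 'c list) set" where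
  "configs = Q \<times> {l. set l \<subseteq> C \<and> length l \<le> bound} \<times> {l. set l \<subseteq> C \<and> length l \<le> bound}"

lemma finite_configs: "finite configs"
  unfolding configs_def using finQ finite_lists_length_le[OF finC] by simp

definition consume :: "nat \<times> 'c list \<times> 'c list \<Rightarrow> ('b option \<times> 'b option) \<Rightarrow> nat \<times> 'c list \<times> 'c list" where
  "consume c \<beta> = (case c of (q, p1, p2) \<Rightarrow>
     (\<delta> q \<beta>, p1 @ subst \<tau> (opt_list (fst \<beta>)), p2 @ subst \<tau> (opt_list (snd \<beta>))))"

definition silent :: "((nat \<times> 'c list \<times> 'c list) \<times> (nat \<times> 'c list \<times> 'c list)) set" where
  "silent = {(c, consume c \<beta>) | c \<beta>. \<beta> \<in> pair_alph B \<and> c \<in> configs \<and> consume c \<beta> \<in> configs}"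

lemma silent_intro: "\<beta> \<in> pair_alph B \<Longrightarrow> c \<in> configs \<Longrightarrow> consume c \<beta> \<in> configs \<Longrightarrow> (c, consume c \<beta>) \<in> silent"
  unfolding silent_def by blast

definition emit :: "('c option \<times> 'c option) \<Rightarrow> nat \<times> 'c list \<times> 'c list \<Rightarrow> (nat \<times> 'c list \<times> 'c list) set" where
  "emit col c = (case c of (q, p1, p2) \<Rightarrow>
     {(q, p1', p2') | p1' p2'. opt_list (fst col) @ p1' = p1 \<and> opt_list (snd col) @ p2' = p2})"

definition trans :: "nat \<times> 'c list \<times> 'c list \<Rightarrow> ('c option \<times> 'c option) \<Rightarrow> (nat \<times> 'c list \<times> 'c list) set" where
  "trans c col = {c2. \<exists>c1. (c, c1) \<in> silent\<^sup>* \<and> c2 \<in> emit col c1}"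

definition accepting :: "(nat \<times> 'c list \<times> 'c list) set" where
  "accepting = {c. \<exists>q\<in>F. (c, (q, [], [])) \<in> silent\<^sup>*}"

lemma trans_configs: "c \<in> configs \<Longrightarrow> trans c col \<subseteq> configs"
proof -
  have "(c, c1) \<in> silent\<^sup>* \<Longrightarrow> c \<in> configs \<Longrightarrow> c1 \<in> configs" for c c1
    by (induction rule: rtrancl_induct) (auto simp: silent_def)
  moreover have "c2 \<in> emit col c1 \<Longrightarrow> c1 \<in> configs \<Longrightarrow> c2 \<in> configs" for c1 c2
    unfolding emit_def configs_def by auto
  ultimately show "c \<in> configs \<Longrightarrow> trans c col \<subseteq> configs" unfolding trans_def by blast
qed

lemma silent_run:
  assumes "(c, c1) \<in> silent\<^sup>*"
  shows "\<exists>z\<in>lists (pair_alph B). c1 = (foldl \<delta> (fst c) z, fst (snd c) @ subst \<tau> (strip (map fst z)),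
           snd (snd c) @ subst \<tau> (strip (map snd z)))"
  using assms
proof (induction rule: rtrancl_induct)
  case base
  then show ?case by (intro bexI[of _ "[]"]) (auto simp: prod_eq_iff)
next
  case (step c1 c2)
  then obtain z where "z \<in> lists (pair_alph B)" "c1 = (foldl \<delta> (fst c) z,
      fst (snd c) @ subst \<tau> (strip (map fst z)), snd (snd c) @ subst \<tau> (strip (map snd z)))" by blast
  moreover obtain \<beta> where "\<beta> \<in> pair_alph B" "c2 = consume c1 \<beta>" using step(2) unfolding silent_def by blast
  ultimately show ?case by (intro bexI[of _ "z @ [\<beta>]"]) (auto simp: consume_def)
qed

lemma accepts_sound:
  assumes "accepts trans accepting (q, p1, p2) w"
  shows "\<exists>z\<in>lists (pair_alph B). foldl \<delta> q z \<in> F \<and>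
    strip (map fst w) = p1 @ subst \<tau> (strip (map fst z)) \<and> strip (map snd w) = p2 @ subst \<tau> (strip (map snd z))"
  using assms
proof (induction w arbitrary: q p1 p2)
  case Nil
  then obtain q' where "q' \<in> F" "((q, p1, p2), (q', [], [])) \<in> silent\<^sup>*" by (auto simp: accepting_def)
  then show ?case using silent_run by fastforce
next
  case (Cons col w)
  then obtain c2 where "c2 \<in> trans (q, p1, p2) col" and acc_c2: "accepts trans accepting c2 w" by auto
  then obtain c1 where c: "((q, p1, p2), c1) \<in> silent\<^sup>*" "c2 \<in> emit col c1"
    unfolding trans_def by blast
  then obtain z1 where z1: "z1 \<in> lists (pair_alph B)" "c1 = (foldl \<delta> q z1,
      p1 @ subst \<tau> (strip (map fst z1)), p2 @ subst \<tau> (strip (map snd z1)))"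
    using silent_run by fastforce
  then obtain p1' p2' where p': "c2 = (foldl \<delta> q z1, p1', p2')"
    "opt_list (fst col) @ p1' = p1 @ subst \<tau> (strip (map fst z1))"
    "opt_list (snd col) @ p2' = p2 @ subst \<tau> (strip (map snd z1))"
    using c(2) unfolding emit_def by auto
  obtain z2 where "z2 \<in> lists (pair_alph B)" "foldl \<delta> (foldl \<delta> q z1) z2 \<in> F"
    "strip (map fst w) = p1' @ subst \<tau> (strip (map fst z2))"
    "strip (map snd w) = p2' @ subst \<tau> (strip (map snd z2))"
    using Cons.IH acc_c2 p'(1) by blast
  then show ?case using z1 p' by (intro bexI[of _ "z1 @ z2"]) auto
qed

lemma silent_accepts: "(c, c') \<in> silent \<Longrightarrow> accepts trans accepting c' w \<Longrightarrow> accepts trans accepting c w"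
proof (cases w)
  case Nil
  assume "(c, c') \<in> silent" "accepts trans accepting c' w"
  then show ?thesis using Nil unfolding accepting_def by (auto intro: converse_rtrancl_into_rtrancl)
next
  case (Cons col w')
  assume "(c, c') \<in> silent" "accepts trans accepting c' w"
  moreover have "trans c' col \<subseteq> trans c col"
    unfolding trans_def using \<open>(c, c') \<in> silent\<close> by (auto intro: converse_rtrancl_into_rtrancl)
  ultimately show ?thesis using Cons by auto
qed

lemma emit_trans: "c2 \<in> emit col c \<Longrightarrow> c2 \<in> trans c col"
  unfolding trans_def by blast

end

text \<open>After
  consuming the first \<open>i\<close> columns of \<open>padR u v\<close> and reading the first \<open>j\<close> columns of the
  padded image pair, the automaton is in configuration \<open>cfg i j\<close>. A column is read as
  soon as both buffers provide it; otherwise the next column is consumed.\<close>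

locale subst_run = subst_automaton +
  fixes u v
  assumes uvS: "(u, v) \<in> S"
begin

definition "z = padR u v"
definition "x = subst \<tau> u"
definition "y = subst \<tau> v"
definition "w = padR x y"

definition "img_u i = subst \<tau> (strip (map fst (take i z)))"
definition "img_v i = subst \<tau> (strip (map snd (take i z)))"

definition "cfg i j = (foldl \<delta> q0 (take i z), drop j (img_u i), drop j (img_v i))"

definition "readable i j \<longleftrightarrow> j < length w \<and>
  (j < length (img_u i) \<or> (img_u i = x \<and> length x \<le> j)) \<and>
  (j < length (img_v i) \<or> (img_v i = y \<and> length y \<le> j))"

lemma z_lists: "z \<in> lists (pair_alph B)" and z_accepted: "foldl \<delta> q0 z \<in> F"
  unfolding z_def using padR_in_S_lang[OF uvS] by auto

lemma img_u_take: "img_u i = subst \<tau> (take i u)"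
  unfolding img_u_def z_def take_padR by simp

lemma img_v_take: "img_v i = subst \<tau> (take i v)"
  unfolding img_v_def z_def take_padR by simp

lemma img_full: "length z \<le> i \<Longrightarrow> img_u i = x \<and> img_v i = y"
  unfolding img_u_def img_v_def x_def y_def z_def by simp

lemma img_prefix: "x = img_u i @ subst \<tau> (strip (map fst (drop i z)))"
    "y = img_v i @ subst \<tau> (strip (map snd (drop i z)))"
proof -
  have "x = subst \<tau> (strip (map fst (take i z @ drop i z)))" "y = subst \<tau> (strip (map snd (take i z @ drop i z)))"
    unfolding x_def y_def z_def by simp_all
  then show "x = img_u i @ subst \<tau> (strip (map fst (drop i z)))"
    "y = img_v i @ subst \<tau> (strip (map snd (drop i z)))"
    unfolding img_u_def img_v_def by (simp_all del: append_take_drop_id)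
qed

lemma length_img_le: "length (img_u i) \<le> length x" "length (img_v i) \<le> length y"
  using img_prefix[of i] by (metis le_add1 length_append)+

lemma img_Suc:
  assumes "i < length z"
  shows "img_u (Suc i) = img_u i @ subst \<tau> (opt_list (fst (z ! i)))"
    and "img_v (Suc i) = img_v i @ subst \<tau> (opt_list (snd (z ! i)))"
    and "length (subst \<tau> (opt_list (fst (z ! i)))) \<le> M"
    and "length (subst \<tau> (opt_list (snd (z ! i)))) \<le> M"
proof -
  have "z ! i \<in> pair_alph B" using z_lists assms by (simp add: in_lists_conv_set)
  then show "length (subst \<tau> (opt_list (fst (z ! i)))) \<le> M" "length (subst \<tau> (opt_list (snd (z ! i)))) \<le> M"
    using length_subst_opt pair_alph_iff[of "fst (z ! i)" "snd (z ! i)"] by auto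
qed (use assms in \<open>simp_all add: img_u_def img_v_def take_Suc_conv_app_nth\<close>)

lemma img_drift: "length (img_v i) \<le> length (img_u i) + drift \<and> length (img_u i) \<le> length (img_v i) + drift"
  unfolding img_u_take img_v_take using prefix_drift[OF uvS, of i] by auto

lemma w_nth:
  assumes "j < length w"
  shows "fst (w ! j) = (if j < length x then Some (x ! j) else None)"
    and "snd (w ! j) = (if j < length y then Some (y ! j) else None)"
proof -
  have "fst (w ! j) = map fst w ! j" "snd (w ! j) = map snd w ! j" using assms by simp_all
  then show "fst (w ! j) = (if j < length x then Some (x ! j) else None)"
    "snd (w ! j) = (if j < length y then Some (y ! j) else None)"
    using assms unfolding w_def padR_fst padR_snd by (auto simp: nth_append)
qed

lemma read_step: "readable i j \<Longrightarrow> cfg i (Suc j) \<in> emit (w ! j) (cfg i j)"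
proof -
  assume r: "readable i j"
  have "opt_list (fst (w ! j)) @ drop (Suc j) (img_u i) = drop j (img_u i)"
  proof (cases "j < length (img_u i)")
    case True
    then have "j < length x" "x ! j = img_u i ! j"
      using length_img_le(1)[of i] img_prefix(1)[of i] by (auto simp: nth_append)
    then show ?thesis using r True w_nth(1)[of j] by (simp add: readable_def Cons_nth_drop_Suc)
  qed (use r w_nth(1)[of j] in \<open>auto simp: readable_def\<close>)
  moreover have "opt_list (snd (w ! j)) @ drop (Suc j) (img_v i) = drop j (img_v i)"
  proof (cases "j < length (img_v i)")
    case True
    then have "j < length y" "y ! j = img_v i ! j"
      using length_img_le(2)[of i] img_prefix(2)[of i] by (auto simp: nth_append)
    then show ?thesis using r True w_nth(2)[of j] by (simp add: readable_def Cons_nth_drop_Suc)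
  qed (use r w_nth(2)[of j] in \<open>auto simp: readable_def\<close>)
  ultimately show ?thesis unfolding emit_def cfg_def by auto
qed

lemma cfg_configs:
  "length (drop j (img_u i)) \<le> bound \<Longrightarrow> length (drop j (img_v i)) \<le> bound \<Longrightarrow> cfg i j \<in> configs"
proof -
  assume "length (drop j (img_u i)) \<le> bound" "length (drop j (img_v i)) \<le> bound"
  moreover have "foldl \<delta> q0 (take i z) \<in> Q"
    using z_lists foldl_closed[OF q0Q \<delta>Q] by (blast dest: in_set_takeD)
  moreover have "img_u i \<in> lists C" "img_v i \<in> lists C"
    unfolding img_u_take img_v_take using S_lists uvS
    by (auto intro!: subst_lists[OF \<tau>_lists] dest: in_set_takeD)
  ultimately show ?thesis unfolding cfg_def configs_def by (auto dest: in_set_dropD)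
qed

text \<open>If column \<open>j\<close> cannot be read, one buffer is exhausted, so the other is at most
  \<open>drift\<close> long; after consuming the next column both stay within \<open>bound\<close>.\<close>

lemma bounded_after_consume:
  assumes "i < length z" "\<not> readable i j" "j < length w"
    and inv: "j \<le> length (img_u i) \<or> img_u i = x" "j \<le> length (img_v i) \<or> img_v i = y"
  shows "length (drop j (img_u (Suc i))) \<le> bound \<and> length (drop j (img_v (Suc i))) \<le> bound"
proof (cases "j < length (img_u i) \<or> (img_u i = x \<and> length x \<le> j)")
  case True
  then have "img_v i \<noteq> y" "j = length (img_v i)"
    using assms(2,3) inv length_img_le(2)[of i] unfolding readable_def by auto
  then show ?thesis
    using img_Suc[OF assms(1)] img_drift[of i] inv(1) length_img_le(1)[of i] unfolding bound_def
    by (auto simp: le_diff_conv)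
next
  case False
  then have "img_u i \<noteq> x" "j = length (img_u i)"
    using inv length_img_le(1)[of i] by auto
  then show ?thesis
    using img_Suc[OF assms(1)] img_drift[of i] inv(2) length_img_le(2)[of i] unfolding bound_def
    by (auto simp: le_diff_conv)
qed

lemma consume_step:
  assumes "i < length z"
    and inv: "j \<le> length (img_u i) \<or> img_u i = x" "j \<le> length (img_v i) \<or> img_v i = y"
  shows "cfg (Suc i) j = consume (cfg i j) (z ! i)"
proof -
  have "img_u i = x \<Longrightarrow> subst \<tau> (opt_list (fst (z ! i))) = []"
    "img_v i = y \<Longrightarrow> subst \<tau> (opt_list (snd (z ! i))) = []"
    using length_img_le[of "Suc i"] img_Suc[OF assms(1)] by auto
  then show ?thesis
    using inv img_Suc[OF assms(1)] unfolding cfg_def consume_def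
    by (auto simp: take_Suc_conv_app_nth assms(1))
qed

lemma accepts_from_cfg:
  "i \<le> length z \<Longrightarrow> j \<le> length w \<Longrightarrow>
   j \<le> length (img_u i) \<or> img_u i = x \<Longrightarrow> j \<le> length (img_v i) \<or> img_v i = y \<Longrightarrow>
   length (drop j (img_u i)) \<le> bound \<Longrightarrow> length (drop j (img_v i)) \<le> bound \<Longrightarrow>
   accepts trans accepting (cfg i j) (drop j w)"
proof (induction "(length z - i) + (length w - j)" arbitrary: i j rule: less_induct)
  case less
  show ?case
  proof (cases "readable i j")
    case True
    then have "accepts trans accepting (cfg i (Suc j)) (drop (Suc j) w)"
      using less by (intro less.hyps) (auto simp: readable_def)
    moreover have "drop j w = w ! j # drop (Suc j) w"
      using True by (simp add: readable_def Cons_nth_drop_Suc)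
    ultimately show ?thesis using emit_trans[OF read_step[OF True]] by auto
  next
    case not_readable: False
    show ?thesis
    proof (cases "i < length z")
      case False
      then have "img_u i = x" "img_v i = y" "i = length z" using img_full less.prems(1) by auto
      then have "j = length w" using not_readable less.prems(2) w_def by (auto simp: readable_def)
      then show ?thesis
        using \<open>img_u i = x\<close> \<open>img_v i = y\<close> \<open>i = length z\<close> z_accepted
        by (auto simp: cfg_def accepting_def w_def)
    next
      case True
      have j: "j < length w \<or> length w \<le> j" by auto
      have bounded: "length (drop j (img_u (Suc i))) \<le> bound \<and> length (drop j (img_v (Suc i))) \<le> bound"
        using j bounded_after_consume[OF True not_readable _ less.prems(3,4)]
          length_img_le[of "Suc i"] less.prems(2) w_def by fastforce
      have inv: "j \<le> length (img_u (Suc i)) \<or> img_u (Suc i) = x" "j \<le> length (img_v (Suc i)) \<or> img_v (Suc i) = y"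
        using less.prems(3,4) img_Suc[OF True] length_img_le[of "Suc i"] by auto
      have "accepts trans accepting (cfg (Suc i) j) (drop j w)"
        using True less.prems bounded inv by (intro less.hyps) auto
      moreover have "(cfg i j, cfg (Suc i) j) \<in> silent"
        unfolding consume_step[OF True less.prems(3,4)]
      proof (rule silent_intro)
        show "z ! i \<in> pair_alph B" using z_lists True by (simp add: in_lists_conv_set)
        show "cfg i j \<in> configs" using cfg_configs[OF less.prems(5,6)] .
        show "consume (cfg i j) (z ! i) \<in> configs"
          using cfg_configs[of j "Suc i"] bounded consume_step[OF True less.prems(3,4)] by simp
      qed
      ultimately show ?thesis using silent_accepts by blast
    qed
  qed
qed

lemma accepts_image: "accepts trans accepting (q0, [], []) w"
  using accepts_from_cfg[of 0 0] by (simp add: cfg_def img_u_def img_v_def)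

end

context subst_automaton
begin

lemma accepts_image_pair:
  "(u, v) \<in> S \<Longrightarrow> accepts trans accepting (q0, [], []) (padR (subst \<tau> u) (subst \<tau> v))"
  using subst_run.accepts_image[of B C S \<tau> K Q q0 \<delta> F u v] subst_run.w_def subst_run.x_def subst_run.y_def
  by (metis subst_automaton_axioms subst_run.intro subst_run_axioms.intro)

lemma regular_image:
  "regular (pair_alph C) ((\<lambda>(u, v). padR u v) ` ((\<lambda>(u, v). (subst \<tau> u, subst \<tau> v)) ` S))"
proof -
  define W where "W = {w \<in> lists (pair_alph C). \<exists>c\<in>{(q0, [], [])}. accepts trans accepting c w}"
  have "regular (pair_alph C) W" unfolding W_def
    by (rule nfa_regular[where U=configs])
       (use finC finite_configs trans_configs q0Q in \<open>auto simp: finite_pair_alph configs_def\<close>)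
  moreover have "(\<lambda>(u, v). padR u v) ` ((\<lambda>(u, v). (subst \<tau> u, subst \<tau> v)) ` S)
      = W \<inter> (\<lambda>(x, y). padR x y) ` (lists C \<times> lists C)"
  proof (intro equalityI subsetI)
    fix w assume "w \<in> (\<lambda>(u, v). padR u v) ` ((\<lambda>(u, v). (subst \<tau> u, subst \<tau> v)) ` S)"
    then obtain u v where uv: "(u, v) \<in> S" "w = padR (subst \<tau> u) (subst \<tau> v)" by auto
    then have "subst \<tau> u \<in> lists C" "subst \<tau> v \<in> lists C"
      using S_lists subst_lists[OF \<tau>_lists] by blast+
    then show "w \<in> W \<inter> (\<lambda>(x, y). padR x y) ` (lists C \<times> lists C)"
      unfolding W_def using accepts_image_pair[OF uv(1)] uv(2) by (auto simp: padR_lists)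
  next
    fix w assume "w \<in> W \<inter> (\<lambda>(x, y). padR x y) ` (lists C \<times> lists C)"
    then obtain x y where w: "w = padR x y" "accepts trans accepting (q0, [], []) w" unfolding W_def by auto
    then obtain z where z: "z \<in> lists (pair_alph B)" "foldl \<delta> q0 z \<in> F"
      "x = subst \<tau> (strip (map fst z))" "y = subst \<tau> (strip (map snd z))"
      using accepts_sound[OF w(2)] by auto
    then have "z \<in> (\<lambda>(u, v). padR u v) ` S" unfolding S_lang by simp
    then obtain u v where "(u, v) \<in> S" "z = padR u v" by auto
    then show "w \<in> (\<lambda>(u, v). padR u v) ` ((\<lambda>(u, v). (subst \<tau> u, subst \<tau> v)) ` S)"
      using w(1) z(3,4) by force
  qed
  ultimately show ?thesis using regular_Int regular_padded_pairs[OF finC] by metis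
qed

end

lemma regular_padR_subst:
  assumes "finite B" "finite C" "S \<subseteq> lists B \<times> lists B" "\<forall>b\<in>B. \<tau> b \<in> lists C"
    and reg: "regular (pair_alph B) ((\<lambda>(u, v). padR u v) ` S)"
    and "\<forall>(u, v)\<in>S. length (subst \<tau> u) \<le> length (subst \<tau> v) + K \<and> length (subst \<tau> v) \<le> length (subst \<tau> u) + K"
  shows "regular (pair_alph C) ((\<lambda>(u, v). padR u v) ` ((\<lambda>(u, v). (subst \<tau> u, subst \<tau> v)) ` S))"
proof -
  obtain Q q0 \<delta> F where "finite (Q::nat set)" "q0 \<in> Q" "\<forall>q\<in>Q. \<forall>a\<in>pair_alph B. \<delta> q a \<in> Q"
    "(\<lambda>(u, v). padR u v) ` S = {w \<in> lists (pair_alph B). foldl \<delta> q0 w \<in> F}"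
    using reg by (auto elim: regularE)
  then interpret subst_automaton B C S \<tau> K Q q0 \<delta> F
    using assms by unfold_locales auto
  show ?thesis by (rule regular_image)
qed

lemma regular_padL_subst:
  assumes "finite B" "finite C" "S \<subseteq> lists B \<times> lists B" "\<forall>b\<in>B. \<tau> b \<in> lists C"
    and reg: "regular (pair_alph B) ((\<lambda>(u, v). padL u v) ` S)"
    and "\<forall>(u, v)\<in>S. length (subst \<tau> u) \<le> length (subst \<tau> v) + K \<and> length (subst \<tau> v) \<le> length (subst \<tau> u) + K"
  shows "regular (pair_alph C) ((\<lambda>(u, v). padL u v) ` ((\<lambda>(u, v). (subst \<tau> u, subst \<tau> v)) ` S))"
proof -
  let ?\<tau>' = "\<lambda>b. rev (\<tau> b)"
  have "regular (pair_alph C) ((\<lambda>(u, v). padR u v) ` ((\<lambda>(u, v). (subst ?\<tau>' u, subst ?\<tau>' v)) ` rev_rel S))"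
  proof (rule regular_padR_subst[where K=K])
    show "regular (pair_alph B) ((\<lambda>(u, v). padR u v) ` rev_rel S)"
      unfolding padR_rev_rel by (rule regular_rev[OF reg])
  qed (use assms in \<open>auto simp: rev_rel_def subst_rev\<close>)
  then have "regular (pair_alph C) (rev ` (\<lambda>(u, v). padR u v) ` ((\<lambda>(u, v). (subst ?\<tau>' u, subst ?\<tau>' v)) ` rev_rel S))"
    by (rule regular_rev)
  moreover have "rev ` (\<lambda>(u, v). padR u v) ` ((\<lambda>(u, v). (subst ?\<tau>' u, subst ?\<tau>' v)) ` rev_rel S)
      = (\<lambda>(u, v). padL u v) ` ((\<lambda>(u, v). (subst \<tau> u, subst \<tau> v)) ` S)"
    unfolding rev_rel_def image_image by (simp add: subst_rev padL_rev case_prod_beta)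
  ultimately show ?thesis by simp
qed

section \<open>Multiplication relations\<close>

lemma eval_Nil [simp]: "eval \<phi> [] = 1"
  unfolding eval_def by simp

lemma eval_Cons [simp]: "eval \<phi> (c # w) = \<phi> c * eval \<phi> w"
  unfolding eval_def by simp

lemma eval_append [simp]: "eval \<phi> (u @ v) = eval \<phi> u * eval \<phi> v"
  unfolding eval_def by (simp add: mult.assoc)

text \<open>Right and left multiplication treated uniformly: \<open>mult_rel True\<close> is \<open>L_a\<close> and
  \<open>mult_rel False\<close> is \<open>\<^sub>aL\<close>; likewise \<open>pad True\<close> is \<open>\<delta>\<^sub>R\<close> and \<open>pad False\<close> is \<open>\<delta>\<^sub>L\<close>.\<close>

definition mult_rel :: "bool \<Rightarrow> ('c \<Rightarrow> 'm::monoid_mult) \<Rightarrow> 'c list set \<Rightarrow> 'c list \<Rightarrow> ('c list \<times> 'c list) set" where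
  "mult_rel d \<phi> L a = (if d then right_rel \<phi> L a else left_rel \<phi> L a)"

definition pad :: "bool \<Rightarrow> 'c list \<Rightarrow> 'c list \<Rightarrow> ('c option \<times> 'c option) list" where
  "pad s u v = (if s then padR u v else padL u v)"

lemma regular_pad_comp:
  assumes "finite C"
    and "regular (pair_alph C) ((\<lambda>(x, y). pad s x y) ` R1)" "regular (pair_alph C) ((\<lambda>(x, y). pad s x y) ` R2)"
    and "\<forall>(x, y)\<in>R1. length x \<le> length y" "\<forall>(x, y)\<in>R2. length x \<le> length y"
  shows "regular (pair_alph C) ((\<lambda>(x, y). pad s x y) ` (R1 O R2))"
  using assms regular_padR_comp[of C R1 R2] regular_padL_comp[of C R1 R2]
  unfolding pad_def by (cases s) simp_all

lemma regular_pad_subst: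
  assumes "finite B" "finite C" "S \<subseteq> lists B \<times> lists B" "\<forall>b\<in>B. \<tau> b \<in> lists C"
    and "regular (pair_alph B) ((\<lambda>(u, v). pad s u v) ` S)"
    and "\<forall>(u, v)\<in>S. length (subst \<tau> u) \<le> length (subst \<tau> v) + K \<and> length (subst \<tau> v) \<le> length (subst \<tau> u) + K"
  shows "regular (pair_alph C) ((\<lambda>(u, v). pad s u v) ` ((\<lambda>(u, v). (subst \<tau> u, subst \<tau> v)) ` S))"
  using assms regular_padR_subst[of B C S \<tau> K] regular_padL_subst[of B C S \<tau> K]
  unfolding pad_def by (cases s) simp_all

lemma mult_rel_iff: "(u, v) \<in> mult_rel d \<phi> L a \<longleftrightarrow> u \<in> L \<and> v \<in> L \<and>
   (if d then eval \<phi> u * eval \<phi> a = eval \<phi> v else eval \<phi> a * eval \<phi> u = eval \<phi> v)"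
  unfolding mult_rel_def right_rel_def left_rel_def by auto

lemma mult_rel_cong: "eval \<phi> a = eval \<phi> a' \<Longrightarrow> mult_rel d \<phi> L a = mult_rel d \<phi> L a'"
  unfolding mult_rel_def right_rel_def left_rel_def by simp

lemma mult_rel_snoc:
  assumes surj: "eval \<phi> ` L = UNIV"
  shows "mult_rel d \<phi> L (a @ [c]) =
    (if d then mult_rel d \<phi> L a O mult_rel d \<phi> L [c] else mult_rel d \<phi> L [c] O mult_rel d \<phi> L a)"
proof (intro equalityI subsetI)
  fix p assume "p \<in> mult_rel d \<phi> L (a @ [c])"
  then obtain x z where p: "p = (x, z)" and xz: "(x, z) \<in> mult_rel d \<phi> L (a @ [c])" by (cases p) auto
  define m where "m = (if d then eval \<phi> x * eval \<phi> a else \<phi> c * eval \<phi> x)"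
  obtain y where "y \<in> L" "eval \<phi> y = m" using surj by (metis UNIV_I imageE)
  then show "p \<in> (if d then mult_rel d \<phi> L a O mult_rel d \<phi> L [c] else mult_rel d \<phi> L [c] O mult_rel d \<phi> L a)"
    using xz unfolding p m_def by (cases d) (auto simp: mult_rel_iff mult.assoc intro!: relcompI[of _ y])
next
  fix p assume "p \<in> (if d then mult_rel d \<phi> L a O mult_rel d \<phi> L [c] else mult_rel d \<phi> L [c] O mult_rel d \<phi> L a)"
  then show "p \<in> mult_rel d \<phi> L (a @ [c])"
    by (cases d) (auto simp: mult_rel_iff, (metis mult.assoc)+)
qed

section \<open>Homogeneous monoids\<close>

lemma rstep_length: "\<forall>(u, v) \<in> R. length u = length v \<Longrightarrow> (s, t) \<in> rstep R \<Longrightarrow> length s = length t"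
  unfolding rstep_def by auto

lemma rcong_length:
  assumes "\<forall>(u, v) \<in> R. length u = length v" "(s, t) \<in> (rstep R \<union> (rstep R)\<inverse>)\<^sup>*"
  shows "length s = length t"
  using assms(2)
proof (induction rule: rtrancl_induct)
  case (step y z)
  then show ?case using rstep_length[OF assms(1)] by auto
qed simp

text \<open>In a monoid with a length-preserving presentation all representatives of an element
  have the same length; this defines a length homomorphism \<open>len\<close> to \<open>\<nat>\<close> with
  \<open>len m = 0\<close> only for \<open>m = 1\<close>.\<close>

locale homogeneous_presentation =
  fixes A :: "nat set" and \<phi>A :: "nat \<Rightarrow> 'm::monoid_mult" and R
  assumes pres: "is_presentation \<phi>A A R" and hom: "\<forall>(u, v) \<in> R. length u = length v"
begin

lemma represented: "\<exists>w\<in>lists A. eval \<phi>A w = m"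
  using pres unfolding is_presentation_def by (metis UNIV_I image_iff)

lemma representatives_same_length:
  "u \<in> lists A \<Longrightarrow> v \<in> lists A \<Longrightarrow> eval \<phi>A u = eval \<phi>A v \<Longrightarrow> length u = length v"
  using pres rcong_length[OF hom] unfolding is_presentation_def rcong_def by auto

definition len :: "'m \<Rightarrow> nat" where
  "len m = length (SOME w. w \<in> lists A \<and> eval \<phi>A w = m)"

lemma len_eval:
  assumes w: "w \<in> lists A"
  shows "len (eval \<phi>A w) = length w"
  unfolding len_def
proof (rule someI2[of _ w])
  show "w \<in> lists A \<and> eval \<phi>A w = eval \<phi>A w" using w by simp
  show "length x = length w" if "x \<in> lists A \<and> eval \<phi>A x = eval \<phi>A w" for x
    using that w representatives_same_length by blast
qed

lemma len_mult: "len (a * b) = len a + len b"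
proof -
  obtain u v where "u \<in> lists A" "eval \<phi>A u = a" "v \<in> lists A" "eval \<phi>A v = b" using represented by metis
  then show ?thesis using len_eval[of "u @ v"] len_eval[of u] len_eval[of v] by auto
qed

lemma len_one: "len 1 = 0"
  using len_eval[of "[]"] by simp

lemma len_eq_0: "len m = 0 \<Longrightarrow> m = 1"
  using represented[of m] len_eval by fastforce

lemma len_mult_rel:
  assumes "(u, v) \<in> mult_rel d \<phi> L a"
  shows "len (eval \<phi> v) = len (eval \<phi> u) + len (eval \<phi> a)"
proof -
  have "eval \<phi> v = (if d then eval \<phi> u * eval \<phi> a else eval \<phi> a * eval \<phi> u)"
    using assms by (auto simp: mult_rel_iff)
  then show ?thesis by (cases d) (simp_all add: len_mult)
qed

text \<open>Atoms (elements of length one) cannot be decomposed, so every generating set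
  contains a letter for each atom; hence every element is a product of atom letters of
  any generating set, and such words have length \<open>len\<close>.\<close>

lemma atom_in_word: "len (eval \<phi> w) = 1 \<Longrightarrow> \<exists>c\<in>set w. \<phi> c = eval \<phi> w \<and> len (\<phi> c) = 1"
proof (induction w)
  case (Cons c w)
  then have sum: "len (\<phi> c) + len (eval \<phi> w) = 1" by (simp add: len_mult)
  show ?case
  proof (cases "len (\<phi> c) = 1")
    case True
    then show ?thesis using sum len_eq_0[of "eval \<phi> w"] by auto
  next
    case False
    then show ?thesis using sum Cons.IH len_eq_0[of "\<phi> c"] by auto
  qed
qed (simp add: len_one)

lemma atom_letter:
  assumes gen: "\<forall>m. \<exists>w \<in> lists G. eval \<phi> w = m" and "len m = 1"
  shows "\<exists>c\<in>G. \<phi> c = m \<and> len (\<phi> c) = 1"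
  using gen atom_in_word assms(2) by (metis in_listsD)

lemma atom_word:
  assumes gen: "\<forall>m. \<exists>w \<in> lists G. eval \<phi> w = m"
  shows "\<exists>x \<in> lists {c\<in>G. len (\<phi> c) = 1}. eval \<phi> x = m"
proof -
  obtain a where a: "a \<in> lists A" "eval \<phi>A a = m" using represented by metis
  have "\<exists>x \<in> lists {c\<in>G. len (\<phi> c) = 1}. eval \<phi> x = eval \<phi>A a" using a(1)
  proof (induction a)
    case (Cons b a)
    then have "len (\<phi>A b) = 1" using len_eval[of "[b]"] by simp
    then obtain c where "c \<in> G" "\<phi> c = \<phi>A b" "len (\<phi> c) = 1" using atom_letter[OF gen] by blast
    moreover obtain x where "x \<in> lists {c\<in>G. len (\<phi> c) = 1}" "eval \<phi> x = eval \<phi>A a" using Cons by auto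
    ultimately show ?case by (intro bexI[of _ "c # x"]) auto
  qed (intro bexI[of _ "[]"], auto)
  then show ?thesis using a(2) by simp
qed

lemma length_atom_word: "x \<in> lists {c\<in>G. len (\<phi> c) = 1} \<Longrightarrow> len (eval \<phi> x) = length x"
  by (induction x) (auto simp: len_one len_mult)

end

section \<open>Transferring a (bi)automatic structure to another generating set\<close>

text \<open>Given a homogeneous presentation, a generating alphabet \<open>C\<close> and a language \<open>L\<close> over
  \<open>B\<close> mapping onto the monoid, replace each letter \<open>b\<close> by a word \<open>\<sigma> b\<close> of atom letters of
  \<open>C\<close> representing the same element; \<open>img_lang = \<sigma>(L)\<close> is the new language.\<close>

locale change_generators = homogeneous_presentation A \<phi>A R
  for A :: "nat set" and \<phi>A :: "nat \<Rightarrow> 'm::monoid_mult" and R +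
  fixes \<phi> :: "'c \<Rightarrow> 'm" and C :: "'c set" and \<psi> :: "nat \<Rightarrow> 'm" and B :: "nat set" and L :: "nat list set"
  assumes finC: "finite C" and genC: "\<forall>m. \<exists>w \<in> lists C. eval \<phi> w = m"
    and finB: "finite B" and L_lists: "L \<subseteq> lists B" and L_onto: "eval \<psi> ` L = UNIV"
begin

definition atom_word_of :: "'m \<Rightarrow> 'c list" where
  "atom_word_of m = (SOME x. x \<in> lists {c\<in>C. len (\<phi> c) = 1} \<and> eval \<phi> x = m)"

lemma atom_word_of: "atom_word_of m \<in> lists {c\<in>C. len (\<phi> c) = 1}" "eval \<phi> (atom_word_of m) = m"
  using someI_ex[OF atom_word[OF genC, of m, unfolded Bex_def]] unfolding atom_word_of_def by auto

definition \<sigma> :: "nat \<Rightarrow> 'c list" where "\<sigma> b = atom_word_of (\<psi> b)"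

definition img_lang :: "'c list set" where "img_lang = subst \<sigma> ` L"

lemma \<sigma>_lists: "\<forall>b\<in>B. \<sigma> b \<in> lists C"
  unfolding \<sigma>_def using atom_word_of(1) by auto

lemma eval_subst_\<sigma>: "eval \<phi> (subst \<sigma> u) = eval \<psi> u"
  by (induction u) (auto simp: \<sigma>_def atom_word_of(2))

lemma length_subst_\<sigma>: "length (subst \<sigma> u) = len (eval \<psi> u)"
proof (induction u)
  case (Cons b u)
  have "length (\<sigma> b) = len (\<psi> b)"
    unfolding \<sigma>_def using length_atom_word[OF atom_word_of(1)] atom_word_of(2) by metis
  then show ?case using Cons by (simp add: len_mult)
qed (simp add: len_one)

lemma genB: "\<forall>m. \<exists>w \<in> lists B. eval \<psi> w = m"
  using L_onto L_lists by (metis UNIV_I image_iff subsetD)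

lemma img_lang_lists: "img_lang \<subseteq> lists C"
  unfolding img_lang_def using L_lists subst_lists[OF \<sigma>_lists] by blast

lemma img_lang_onto: "eval \<phi> ` img_lang = UNIV"
  unfolding img_lang_def image_image eval_subst_\<sigma> using L_onto by simp

lemma length_img_lang: "x \<in> img_lang \<Longrightarrow> length x = len (eval \<phi> x)"
  unfolding img_lang_def using length_subst_\<sigma> eval_subst_\<sigma> by auto

lemma mult_rel_img_lang_mono: "\<forall>(x, y)\<in>mult_rel d \<phi> img_lang a. length x \<le> length y"
proof (intro ballI, clarify)
  fix x y assume xy: "(x, y) \<in> mult_rel d \<phi> img_lang a"
  then have "x \<in> img_lang" "y \<in> img_lang" by (simp_all add: mult_rel_iff)
  then show "length x \<le> length y" using len_mult_rel[OF xy] length_img_lang by simp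
qed

lemma mult_rel_img_lang:
  assumes "eval \<phi> a = eval \<psi> a'"
  shows "mult_rel d \<phi> img_lang a = (\<lambda>(u, v). (subst \<sigma> u, subst \<sigma> v)) ` mult_rel d \<psi> L a'"
proof (intro equalityI subsetI)
  fix p assume "p \<in> mult_rel d \<phi> img_lang a"
  moreover obtain x y where p: "p = (x, y)" by force
  ultimately have xy: "x \<in> img_lang" "y \<in> img_lang"
    "if d then eval \<phi> x * eval \<phi> a = eval \<phi> y else eval \<phi> a * eval \<phi> x = eval \<phi> y"
    by (simp_all add: mult_rel_iff)
  then obtain u v where uv: "u \<in> L" "v \<in> L" "x = subst \<sigma> u" "y = subst \<sigma> v"
    unfolding img_lang_def by auto
  then have "(u, v) \<in> mult_rel d \<psi> L a'" using xy(3) assms by (auto simp: mult_rel_iff eval_subst_\<sigma>)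
  then show "p \<in> (\<lambda>(u, v). (subst \<sigma> u, subst \<sigma> v)) ` mult_rel d \<psi> L a'" using p uv by force
next
  fix p assume "p \<in> (\<lambda>(u, v). (subst \<sigma> u, subst \<sigma> v)) ` mult_rel d \<psi> L a'"
  then obtain u v where "(u, v) \<in> mult_rel d \<psi> L a'" "p = (subst \<sigma> u, subst \<sigma> v)" by auto
  then show "p \<in> mult_rel d \<phi> img_lang a"
    using assms by (auto simp: mult_rel_iff eval_subst_\<sigma> img_lang_def)
qed

text \<open>For a multiplier that is a letter of \<open>B\<close> (or empty), the substitution lemma applies
  since \<open>\<sigma>\<close>-images of related words differ in length by the length of the multiplier.\<close>

lemma regular_mult_rel_img_lang_base:
  assumes reg: "regular (pair_alph B) ((\<lambda>(u, v). pad s u v) ` mult_rel d \<psi> L a')"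
    and eq: "eval \<phi> a = eval \<psi> a'"
  shows "regular (pair_alph C) ((\<lambda>(x, y). pad s x y) ` mult_rel d \<phi> img_lang a)"
proof -
  have sub: "mult_rel d \<psi> L a' \<subseteq> lists B \<times> lists B"
    using L_lists by (auto simp: mult_rel_iff)
  have diff: "\<forall>(u, v)\<in>mult_rel d \<psi> L a'. length (subst \<sigma> u) \<le> length (subst \<sigma> v) + len (eval \<psi> a') \<and>
      length (subst \<sigma> v) \<le> length (subst \<sigma> u) + len (eval \<psi> a')"
    using len_mult_rel unfolding length_subst_\<sigma> by fastforce
  show ?thesis
    unfolding mult_rel_img_lang[OF eq] by (rule regular_pad_subst[OF finB finC sub \<sigma>_lists reg diff])
qed

text \<open>For an arbitrary multiplier \<open>a\<close>: replace \<open>a\<close> by an atom word with the same value,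
  which is a product of atom letters, and compose.\<close>

lemma regular_mult_rel_img_lang:
  assumes H: "\<forall>a\<in>short_words B. regular (pair_alph B) ((\<lambda>(u, v). pad s u v) ` mult_rel d \<psi> L a)"
  shows "regular (pair_alph C) ((\<lambda>(x, y). pad s x y) ` mult_rel d \<phi> img_lang a)"
proof -
  have atoms: "regular (pair_alph C) ((\<lambda>(x, y). pad s x y) ` mult_rel d \<phi> img_lang ws)"
    if "ws \<in> lists {c\<in>C. len (\<phi> c) = 1}" for ws
    using that
  proof (induction ws rule: rev_induct)
    case Nil
    have "[] \<in> short_words B" by (simp add: short_words_def)
    then show ?case by (rule regular_mult_rel_img_lang_base[OF H[rule_format]]) simp
  next
    case (snoc c ws)
    then have "c \<in> C" "len (\<phi> c) = 1" by auto
    then obtain b where "b \<in> B" "\<psi> b = \<phi> c"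
      using atom_letter[OF genB \<open>len (\<phi> c) = 1\<close>] by blast
    then have "[b] \<in> short_words B" "eval \<phi> [c] = eval \<psi> [b]" by (simp_all add: short_words_def)
    then have "regular (pair_alph C) ((\<lambda>(x, y). pad s x y) ` mult_rel d \<phi> img_lang [c])"
      by (intro regular_mult_rel_img_lang_base[OF H[rule_format]])
    moreover have "regular (pair_alph C) ((\<lambda>(x, y). pad s x y) ` mult_rel d \<phi> img_lang ws)"
      using snoc by simp
    ultimately show ?case
      unfolding mult_rel_snoc[OF img_lang_onto]
      using regular_pad_comp[OF finC _ _ mult_rel_img_lang_mono mult_rel_img_lang_mono] by (cases d) simp_all
  qed
  have "mult_rel d \<phi> img_lang a = mult_rel d \<phi> img_lang (atom_word_of (eval \<phi> a))"
    using atom_word_of(2) by (rule mult_rel_cong[symmetric])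
  then show ?thesis using atoms[OF atom_word_of(1)] by simp
qed

text \<open>The language itself is regular: it is the diagonal of its relation \<open>K\<^sub>\<epsilon>\<close>.\<close>

lemma regular_img_lang:
  assumes "regular (pair_alph C) ((\<lambda>(x, y). padR x y) ` right_rel \<phi> img_lang [])"
  shows "regular C img_lang"
proof -
  have "regular C {x \<in> lists C. map (\<lambda>c. (Some c, Some c)) x \<in> (\<lambda>(x, y). padR x y) ` right_rel \<phi> img_lang []}"
    by (rule regular_preimage_map[OF assms finC]) (auto simp: pair_alph_def)
  moreover have "{x \<in> lists C. map (\<lambda>c. (Some c, Some c)) x \<in> (\<lambda>(x, y). padR x y) ` right_rel \<phi> img_lang []}
      = img_lang"
    using img_lang_lists by (auto simp: right_rel_def padR_diag[symmetric] dest: padR_inj)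
  ultimately show ?thesis by simp
qed

lemma automatic_transfer:
  assumes "automatic_structure \<psi> B L"
  shows "automatic_structure \<phi> C img_lang"
proof -
  have "regular (pair_alph C) ((\<lambda>(u, v). padR u v) ` right_rel \<phi> img_lang a)" for a
    using regular_mult_rel_img_lang[of True True a] assms
    unfolding automatic_structure_def pad_def mult_rel_def by simp
  then show ?thesis
    unfolding automatic_structure_def using finC img_lang_lists img_lang_onto regular_img_lang by blast
qed

lemma biautomatic_transfer:
  assumes "biautomatic_structure \<psi> B L"
  shows "biautomatic_structure \<phi> C img_lang"
proof -
  have "\<forall>a\<in>short_words B. regular (pair_alph B) ((\<lambda>(u, v). pad s u v) ` mult_rel d \<psi> L a)" for s d
    using assms unfolding biautomatic_structure_def pad_def mult_rel_def by (cases s; cases d) simp_all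
  then have R: "regular (pair_alph C) ((\<lambda>(x, y). pad s x y) ` mult_rel d \<phi> img_lang a)" for s d a
    by (rule regular_mult_rel_img_lang)
  have "regular (pair_alph C) ((\<lambda>(u, v). padR u v) ` right_rel \<phi> img_lang a) \<and>
      regular (pair_alph C) ((\<lambda>(u, v). padR u v) ` left_rel \<phi> img_lang a) \<and>
      regular (pair_alph C) ((\<lambda>(u, v). padL u v) ` right_rel \<phi> img_lang a) \<and>
      regular (pair_alph C) ((\<lambda>(u, v). padL u v) ` left_rel \<phi> img_lang a)" for a
    using R[of True True a] R[of True False a] R[of False True a] R[of False False a]
    unfolding pad_def mult_rel_def by simp
  then show ?thesis
    unfolding biautomatic_structure_def using finC img_lang_lists img_lang_onto regular_img_lang by blast
qed

end

theorem proposition2p4: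
  fixes \<phi> :: "'c \<Rightarrow> 'm::monoid_mult" and C :: "'c set"
  assumes "homogeneous TYPE('m)"
    and "finite C"
    and "\<forall>m. \<exists>w \<in> lists C. eval \<phi> w = m"
  shows "(automatic TYPE('m) \<longrightarrow> (\<exists>K \<subseteq> lists C. automatic_structure \<phi> C K)) \<and>
         (biautomatic TYPE('m) \<longrightarrow> (\<exists>K \<subseteq> lists C. biautomatic_structure \<phi> C K))"
proof -
  obtain A :: "nat set" and \<phi>A :: "nat \<Rightarrow> 'm" and R
    where hom: "homogeneous_presentation A \<phi>A R"
    using assms(1) unfolding homogeneous_def homogeneous_presentation_def by blast
  have transfer: "change_generators A \<phi>A R \<phi> C \<psi> B L"
    if "finite B" "L \<subseteq> lists B" "eval \<psi> ` L = UNIV" for \<psi> :: "nat \<Rightarrow> 'm" and B L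
    using hom assms(2,3) that by (simp add: change_generators_def change_generators_axioms_def)
  show ?thesis
  proof (intro conjI impI)
    assume "automatic TYPE('m)"
    then obtain B :: "nat set" and \<psi> :: "nat \<Rightarrow> 'm" and L where S: "automatic_structure \<psi> B L"
      unfolding automatic_def by blast
    then interpret change_generators A \<phi>A R \<phi> C \<psi> B L
      by (intro transfer) (auto simp: automatic_structure_def)
    show "\<exists>K \<subseteq> lists C. automatic_structure \<phi> C K"
      using automatic_transfer[OF S] img_lang_lists by blast
  next
    assume "biautomatic TYPE('m)"
    then obtain B :: "nat set" and \<psi> :: "nat \<Rightarrow> 'm" and L where S: "biautomatic_structure \<psi> B L"
      unfolding biautomatic_def by blast
    then interpret change_generators A \<phi>A R \<phi> C \<psi> B L
      by (intro transfer) (auto simp: biautomatic_structure_def)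
    show "\<exists>K \<subseteq> lists C. biautomatic_structure \<phi> C K"
      using biautomatic_transfer[OF S] img_lang_lists by blast
  qed
qed

end
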